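(* There exists a constant $C>0$ such that for all $t,s\in(0,1)$ and all integers $j_1\le j_2$ with $j_2\ge0$, both quantities \[\sum_{k_1\in\mathbb{Z}}\sum_{k_2\in\mathbb{Z}_{j_2}[t,s]}L_{j_1,j_2}^{k_1,k_2}\Big|\int_{-\infty}^{\min\{s,t\}}\psi_{H_1}(2^{j_1}x-k_1)\psi_{H_2}(2^{j_2}x-k_2)dx\Big|\] and \[\sum_{k_1\in\mathbb{Z}}\sum_{k_2\in\mathbb{Z}_{j_2}[t,s]}L_{j_1,j_2}^{k_1,k_2}\Big|\int_{\max\{s,t\}}^{+\infty}\psi_{H_1}(2^{j_1}x-k_1)\psi_{H_2}(2^{j_2}x-k_2)dx\Big|\] are bounded above by $C\sqrt{\log(3+|j_1|+2^{j_2})}\sqrt{\log(3+|j_2|+2^{j_2})}\,2^{-j_2}$.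
   Context: Fix $H_1,H_2\in(\tfrac12,1)$ with $H_1+H_2>\tfrac32$. Let $\psi$ be the Meyer wavelet (Schwartz, $\widehat\psi$ compactly supported away from $0$, generating an orthonormal wavelet basis of $L^2(\mathbb{R})$). For $H\in(\tfrac12,1)$, $\psi_H$ is defined by $\widehat{\psi_H}(0)=0$, $\widehat{\psi_H}(\xi)=(i\xi)^{-(H-\frac12)}\widehat\psi(\xi)$ ($\xi\neq0$); equivalently $\psi_H(t)=\frac{1}{\Gamma(H-\frac12)}\int_{\mathbb{R}}(t-x)_+^{H-\frac32}\psi(x)dx$. Set $L_{j_1,j_2}^{k_1,k_2}=\sqrt{\log(3+|j_1|+|k_1|)}\sqrt{\log(3+|j_2|+|k_2|)}$ and $\mathbb{Z}_{j}[t,s]=\{k\in\mathbb{Z}:\min\{t,s\}\le k2^{-j}\le\max\{t,s\}\}$. *)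

theory Defs
  imports "HOL-Analysis.Analysis"
begin

definition fourier :: "(real \<Rightarrow> real) \<Rightarrow> real \<Rightarrow> complex" where
  "fourier f \<xi> = (LINT x|lborel. complex_of_real (f x) * cis (- \<xi> * x))"

definition schwartz :: "(real \<Rightarrow> real) \<Rightarrow> bool" where
  "schwartz f \<longleftrightarrow>
     (\<forall>n x. ((deriv ^^ n) f) differentiable (at x)) \<and>
     (\<forall>m n. \<exists>B. \<forall>x. \<bar>x\<bar> ^ m * \<bar>(deriv ^^ n) f x\<bar> \<le> B)"

definition wav :: "(real \<Rightarrow> real) \<Rightarrow> int \<Rightarrow> int \<Rightarrow> real \<Rightarrow> real" where
  "wav \<psi> j k x = 2 powr (real_of_int j / 2) * \<psi> (2 powr real_of_int j * x - real_of_int k)"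

definition wavelet_onb :: "(real \<Rightarrow> real) \<Rightarrow> bool" where
  "wavelet_onb \<psi> \<longleftrightarrow>
     (\<forall>j k j' k'. integrable lborel (\<lambda>x. wav \<psi> j k x * wav \<psi> j' k' x) \<and>
        (LINT x|lborel. wav \<psi> j k x * wav \<psi> j' k' x) = (if j = j' \<and> k = k' then 1 else 0)) \<and>
     (\<forall>f. f \<in> borel_measurable lborel \<and> integrable lborel (\<lambda>x. (f x)\<^sup>2) \<and>
        (\<forall>j k. (LINT x|lborel. f x * wav \<psi> j k x) = 0) \<longrightarrow> (AE x in lborel. f x = 0))"

definition meyer_type_wavelet :: "(real \<Rightarrow> real) \<Rightarrow> bool" where
  "meyer_type_wavelet \<psi> \<longleftrightarrow> schwartz \<psi> \<and>
     (\<exists>a b. 0 < a \<and> a < b \<and> (\<forall>\<xi>. (\<bar>\<xi>\<bar> < a \<or> b < \<bar>\<xi>\<bar>) \<longrightarrow> fourier \<psi> \<xi> = 0)) \<and>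
     wavelet_onb \<psi>"

definition psiH :: "real \<Rightarrow> (real \<Rightarrow> real) \<Rightarrow> real \<Rightarrow> real" where
  "psiH H \<psi> t = (1 / Gamma (H - 1/2)) *
     (LINT x|lborel. (if x < t then (t - x) powr (H - 3/2) else 0) * \<psi> x)"

definition Lweight :: "int \<Rightarrow> int \<Rightarrow> int \<Rightarrow> int \<Rightarrow> real" where
  "Lweight j1 j2 k1 k2 = sqrt (ln (3 + \<bar>real_of_int j1\<bar> + \<bar>real_of_int k1\<bar>)) *
                         sqrt (ln (3 + \<bar>real_of_int j2\<bar> + \<bar>real_of_int k2\<bar>))"

definition Zset :: "int \<Rightarrow> real \<Rightarrow> real \<Rightarrow> int set" where
  "Zset j t s = {k. min t s \<le> real_of_int k * 2 powr (- real_of_int j) \<and>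
                    real_of_int k * 2 powr (- real_of_int j) \<le> max t s}"

definition prodH :: "real \<Rightarrow> real \<Rightarrow> (real \<Rightarrow> real) \<Rightarrow> int \<Rightarrow> int \<Rightarrow> int \<Rightarrow> int \<Rightarrow> real \<Rightarrow> real" where
  "prodH H1 H2 \<psi> j1 j2 k1 k2 x =
     psiH H1 \<psi> (2 powr real_of_int j1 * x - real_of_int k1) *
     psiH H2 \<psi> (2 powr real_of_int j2 * x - real_of_int k2)"

end

theory Submission
  imports Defs "HOL-Real_Asymp.Real_Asymp"
begin

text \<open>
  Up to the factor \<open>1/\<Gamma>(H - 1/2)\<close>, \<open>\<psi>\<^sub>H\<close> is the Riemann--Liouville integral of \<open>\<psi>\<close> with kernel
  \<open>(t - x)\<^sub>+\<^bsup>H - 3/2\<^esup>\<close>. As \<open>\<psi>\<close> is a Schwartz function whose Fourier transform vanishes near \<open>0\<close>,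
  its moments of order \<open>0\<close> and \<open>1\<close> vanish; subtracting the first-order Taylor polynomial of the
  kernel in \<open>x\<close> therefore costs nothing and shows \<open>\<psi>\<^sub>H(y) = O((1 + \<bar>y\<bar>)\<^bsup>-5/2\<^esup>)\<close>.

  Write \<open>b = 2\<^bsup>j\<^sub>2\<^esup>\<close> and \<open>m = min s t\<close>. For \<open>x \<le> m\<close> the integers \<open>k\<^sub>2\<close> of the window
  \<open>[b m, b max s t]\<close> satisfy \<open>\<bar>b x - k\<^sub>2\<bar> \<ge> b (m - x) + (k\<^sub>2 - \<lceil>b m\<rceil>)\<close>, so the sum over \<open>k\<^sub>2\<close> of the decay
  is \<open>O((1 + b (m - x))\<^bsup>-3/2\<^esup>)\<close>, while the sum over \<open>k\<^sub>1 \<in> \<int>\<close> is bounded uniformly. Since \<open>2\<^bsup>j\<^sub>1\<^esup> \<le> b\<close>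
  and the window lies in \<open>[0, b]\<close>, the weight of \<open>k\<^sub>2\<close> is at most its value at \<open>b\<close>, and that of \<open>k\<^sub>1\<close>
  at most twice its value at \<open>b\<close> times \<open>(1 + \<bar>x\<bar>)\<^bsup>1/4\<^esup> (1 + \<bar>2\<^bsup>j\<^sub>1\<^esup> x - k\<^sub>1\<bar>)\<^bsup>1/4\<^esup>\<close>; these factors
  are absorbed by the decay.
  What remains is \<open>\<integral>\<^bsub>x \<le> m\<^esub> (1 + b (m - x))\<^bsup>-5/4\<^esup> dx = 4/b\<close>. The half-line \<open>x \<ge> max s t\<close> is
  symmetric.
\<close>

section \<open>Integrals and sums of powers\<close>

lemma set_integral_eq_of_nonneg_has_integral:
  fixes f :: "real \<Rightarrow> real"
  assumes meas: "f \<in> borel_measurable borel" and S: "S \<in> sets borel"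
    and nonneg: "\<And>x. x \<in> S \<Longrightarrow> 0 \<le> f x" and hi: "(f has_integral I) S"
  shows "set_integrable lborel S f \<and> (LINT x:S|lborel. f x) = I"
proof -
  have abs_int: "f absolutely_integrable_on S"
    using nonnegative_absolutely_integrable_1[of f S] hi nonneg by (auto simp: has_integral_integrable)
  have m: "(\<lambda>x. indicator S x *\<^sub>R f x) \<in> borel_measurable lborel"
    using meas S by measurable
  have si: "set_integrable lborel S f"
    using abs_int integrable_completion[OF m] unfolding set_integrable_def by simp
  have "set_lebesgue_integral lebesgue S f = integral S f"
    using set_lebesgue_integral_eq_integral(2)[OF abs_int] .
  moreover have "set_lebesgue_integral lebesgue S f = set_lebesgue_integral lborel S f"
    unfolding set_lebesgue_integral_def using integral_completion[OF m] by simp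
  ultimately show ?thesis using si hi integral_unique by auto
qed

lemma has_integral_powr_affine_atLeast:
  fixes b q r c :: real
  assumes b: "b > 0" and q: "q > 0" and r: "r > 1"
  shows "((\<lambda>x. (q + b*(x-c)) powr (-r)) has_integral (q powr (1-r) / (b*(r-1)))) {c..}"
proof (rule has_integral_to_inf)
  define F where "F \<equiv> \<lambda>x. - ((q + b*(x-c)) powr (1-r)) / (b*(r-1))"
  have antideriv: "((\<lambda>x. (q + b*(x-c)) powr (-r)) has_integral (F y - F c)) {c..y}" if "y \<ge> c" for y
  proof (intro fundamental_theorem_of_calculus that)
    fix x assume x: "x \<in> {c..y}"
    have pos: "0 < q + b*(x-c)" using x b q by (simp add: add_pos_nonneg)
    have "(F has_real_derivative (- ((1-r) * (q + b*(x-c)) powr (1-r-1) * b) / (b*(r-1))))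
            (at x within {c..y})"
      unfolding F_def using pos r by (auto intro!: derivative_eq_intros)
    moreover have "- ((1-r) * (q + b*(x-c)) powr (1-r-1) * b) / (b*(r-1)) = (q + b*(x-c)) powr (-r)"
      using b r pos by (simp add: field_simps powr_diff powr_minus)
    ultimately show "(F has_vector_derivative (q + b*(x-c)) powr (-r)) (at x within {c..y})"
      by (simp add: has_real_derivative_iff_has_vector_derivative)
  qed
  show "(\<lambda>x. (q + b*(x-c)) powr (-r)) integrable_on {c..y}" for y
    by (cases "c \<le> y") (use antideriv in \<open>auto simp: has_integral_integrable\<close>)
  show "\<And>y. c \<le> y \<Longrightarrow> 0 \<le> (q + b*(y-c)) powr (-r)" by simp
  have "\<forall>\<^sub>F y in at_top. integral {c..y} (\<lambda>x. (q + b*(x-c)) powr (-r)) = F y - F c"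
    using antideriv by (meson eventually_at_top_linorderI integral_unique)
  moreover have "((\<lambda>y::real. F y - F c) \<longlongrightarrow> q powr (1-r) / (b*(r-1))) at_top"
    using assms unfolding F_def by real_asymp
  ultimately show "((\<lambda>y. integral {c..y} (\<lambda>x. (q + b*(x-c)) powr (-r))) \<longlongrightarrow> q powr (1-r) / (b*(r-1))) at_top"
    by (simp add: filterlim_cong)
qed

lemma set_integral_powr_affine_atLeast:
  fixes b q r c :: real
  assumes "b > 0" "q > 0" "r > 1"
  shows "set_integrable lborel {c..} (\<lambda>x. (q + b*(x-c)) powr (-r)) \<and>
         (LINT x:{c..}|lborel. (q + b*(x-c)) powr (-r)) = q powr (1-r) / (b*(r-1))"
  by (rule set_integral_eq_of_nonneg_has_integral[OF _ _ _ has_integral_powr_affine_atLeast[OF assms]]) auto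

lemma set_integral_powr_affine_atMost:
  fixes b q r c :: real
  assumes "b > 0" "q > 0" "r > 1"
  shows "set_integrable lborel {..c} (\<lambda>x. (q + b*(c-x)) powr (-r)) \<and>
         (LINT x:{..c}|lborel. (q + b*(c-x)) powr (-r)) = q powr (1-r) / (b*(r-1))"
proof -
  define g where "g = (\<lambda>x::real. indicator {..c} x *\<^sub>R (q + b*(c-x)) powr (-r))"
  have reflect: "(\<lambda>x. g (0 + (-1) * x)) = (\<lambda>x. indicator {-c..} x *\<^sub>R (q + b*(x-(-c))) powr (-r))"
    by (auto simp: g_def indicator_def algebra_simps fun_eq_iff)
  have up: "set_integrable lborel {-c..} (\<lambda>x. (q + b*(x-(-c))) powr (-r))"
     "(LINT x:{-c..}|lborel. (q + b*(x-(-c))) powr (-r)) = q powr (1-r) / (b*(r-1))"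
    using set_integral_powr_affine_atLeast[OF assms, of "-c"] by auto
  have "integrable lborel g"
    using up(1) lborel_integrable_real_affine_iff[of "-1" g 0] reflect
    unfolding set_integrable_def by simp
  moreover have "integral\<^sup>L lborel g = q powr (1-r) / (b*(r-1))"
    using lborel_integral_real_affine[of "-1" g 0] reflect up(2)
    unfolding set_lebesgue_integral_def by simp
  ultimately show ?thesis unfolding set_integrable_def set_lebesgue_integral_def g_def by simp
qed

lemma integrable_one_plus_abs_powr:
  fixes r :: real
  assumes r: "r > 1"
  shows "integrable lborel (\<lambda>x. (1 + \<bar>x\<bar>) powr (-r))"
proof -
  have "set_integrable lborel {0..} (\<lambda>x. (1 + 1*(x-0)) powr (-r))"
    using set_integral_powr_affine_atLeast[of 1 1 r 0] r by simp
  then have right: "set_integrable lborel {0..} (\<lambda>x. (1 + \<bar>x\<bar>) powr (-r))"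
    by (rule set_integrable_cong[THEN iffD1, rotated -1]) auto
  have "set_integrable lborel {..0} (\<lambda>x. (1 + 1*(0-x)) powr (-r))"
    using set_integral_powr_affine_atMost[of 1 1 r 0] r by simp
  then have left: "set_integrable lborel {..0} (\<lambda>x. (1 + \<bar>x\<bar>) powr (-r))"
    by (rule set_integrable_cong[THEN iffD1, rotated -1]) auto
  have "set_integrable lborel ({..0} \<union> {0..}) (\<lambda>x. (1 + \<bar>x\<bar>) powr (-r))"
    by (rule set_integrable_Un[OF left right]) auto
  moreover have "{..0} \<union> {0..} = (UNIV::real set)" by auto
  ultimately show ?thesis by (simp add: set_integrable_def)
qed

lemma integrable_one_plus_abs_affine_powr:
  fixes r b k :: real
  assumes "r > 1" "b \<noteq> 0"
  shows "integrable lborel (\<lambda>x. (1 + \<bar>b*x - k\<bar>) powr (-r))"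
  using lborel_integrable_real_affine_iff[of b "\<lambda>x. (1 + \<bar>x\<bar>) powr (-r)" "-k"]
    integrable_one_plus_abs_powr assms
  by (simp add: algebra_simps)

lemma set_integral_powr_diff_unit_interval:
  fixes e t :: real
  assumes e: "-1 < e"
  shows "set_integrable lborel {t-1..t} (\<lambda>x. (t-x) powr e) \<and>
         (LINT x:{t-1..t}|lborel. (t-x) powr e) = 1/(e+1)"
proof -
  have unit: "set_integrable lborel {0..1} (\<lambda>u. u powr e) \<and> (LINT u:{0..1}|lborel. u powr e) = 1/(e+1)"
    using set_integral_eq_of_nonneg_has_integral[of "\<lambda>u. u powr e" "{0..1}" "1 powr (e+1)/(e+1)"]
      has_integral_powr_from_0[OF e, of 1]
    by simp
  define g where "g = (\<lambda>x::real. indicator {t-1..t} x *\<^sub>R (t-x) powr e)"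
  have reflect: "(\<lambda>u. g (t + (-1) * u)) = (\<lambda>u. indicator {0..1} u *\<^sub>R u powr e)"
    by (auto simp: g_def indicator_def fun_eq_iff)
  have "integrable lborel g"
    using unit lborel_integrable_real_affine_iff[of "-1" g t] reflect
    unfolding set_integrable_def by simp
  moreover have "integral\<^sup>L lborel g = 1/(e+1)"
    using lborel_integral_real_affine[of "-1" g t] reflect unit
    unfolding set_lebesgue_integral_def by simp
  ultimately show ?thesis unfolding set_integrable_def set_lebesgue_integral_def g_def by simp
qed

lemma powr_le_telescoping:
  fixes r u :: real
  assumes r: "r > 1" and u: "u > 0"
  shows "(r-1) * (u+1) powr (-r) \<le> u powr (1-r) - (u+1) powr (1-r)"
proof -
  have "\<exists>z. u < z \<and> z < u+1 \<and> (u+1) powr (1-r) - u powr (1-r) = ((u+1) - u) * ((1-r) * z powr (1-r-1))"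
    by (rule MVT2) (use u in \<open>auto intro!: derivative_eq_intros\<close>)
  then obtain z where z: "u < z" "z < u+1" "(u+1) powr (1-r) - u powr (1-r) = (1-r) * z powr (-r)"
    by (auto simp: algebra_simps)
  have "(u+1) powr (-r) \<le> z powr (-r)"
    using z u r by (intro powr_mono2') auto
  then have "(r-1) * (u+1) powr (-r) \<le> (r-1) * z powr (-r)" using r by simp
  then show ?thesis using z(3) by (simp add: algebra_simps)
qed

lemma sum_lessThan_powr_le:
  fixes r v :: real
  assumes r: "r > 1" and v: "v \<ge> 0"
  shows "(\<Sum>i<N. (1+v+real i) powr (-r)) \<le> (r/(r-1)) * (1+v) powr (1-r)"
proof -
  have telescoped: "(\<Sum>i<Suc n. (1+v+real i) powr (-r))
      \<le> (1+v) powr (-r) + ((1+v) powr (1-r) - (v + real (Suc n)) powr (1-r))/(r-1)" for n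
  proof (induction n)
    case 0
    then show ?case by (simp add: add.commute)
  next
    case (Suc n)
    have "(r-1) * ((v+real (Suc n))+1) powr (-r)
        \<le> (v+real (Suc n)) powr (1-r) - ((v+real (Suc n))+1) powr (1-r)"
      using v by (intro powr_le_telescoping r) auto
    then have "(1+v+real (Suc n)) powr (-r)
        \<le> ((v+real (Suc n)) powr (1-r) - (v+real (Suc (Suc n))) powr (1-r))/(r-1)"
      using r by (simp add: field_simps)
    with Suc.IH show ?case
      by (simp add: diff_divide_distrib)
  qed
  have "(1+v) powr (-r) \<le> (1+v) powr (1-r)" using v r by (intro powr_mono) auto
  then show ?thesis
  proof (cases N)
    case (Suc n)
    have "(\<Sum>i<N. (1+v+real i) powr (-r)) \<le> (1+v) powr (1-r) + (1+v) powr (1-r)/(r-1)"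
      using telescoped[of n] \<open>(1+v) powr (-r) \<le> _\<close> r Suc
      by (smt (verit, ccfv_SIG) divide_right_mono powr_ge_zero)
    also have "\<dots> = (r/(r-1)) * (1+v) powr (1-r)" using r by (simp add: field_simps)
    finally show ?thesis .
  qed (use r in simp)
qed

lemma sum_powr_inj_le:
  fixes F :: "'a set" and \<phi> :: "'a \<Rightarrow> nat" and E :: "'a \<Rightarrow> real"
  assumes fin: "finite F" and inj: "inj_on \<phi> F" and r: "r > 1" and v: "v \<ge> 0"
    and E: "\<And>k. k \<in> F \<Longrightarrow> v + real (\<phi> k) \<le> E k"
  shows "(\<Sum>k\<in>F. (1 + E k) powr (-r)) \<le> (r/(r-1)) * (1+v) powr (1-r)"
proof -
  obtain N where N: "\<phi> ` F \<subseteq> {..<N}"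
    using fin by (metis finite_imageI finite_nat_iff_bounded)
  have "(\<Sum>k\<in>F. (1 + E k) powr (-r)) \<le> (\<Sum>k\<in>F. (1 + v + real (\<phi> k)) powr (-r))"
    using E v r by (intro sum_mono powr_mono2') (auto simp: add.assoc)
  also have "\<dots> = (\<Sum>i\<in>\<phi> ` F. (1 + v + real i) powr (-r))"
    using sum.reindex[OF inj, of "\<lambda>i. (1 + v + real i) powr (-r)"] by simp
  also have "\<dots> \<le> (\<Sum>i<N. (1 + v + real i) powr (-r))"
    by (rule sum_mono2) (use N in auto)
  also have "\<dots> \<le> (r/(r-1)) * (1+v) powr (1-r)" by (rule sum_lessThan_powr_le[OF r v])
  finally show ?thesis .
qed

lemma sum_powr_dist_int_le:
  fixes F :: "int set" and z r :: real
  assumes fin: "finite F" and r: "r > 1"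
  shows "(\<Sum>k\<in>F. (1 + \<bar>z - real_of_int k\<bar>) powr (-r)) \<le> 2 * (r/(r-1))"
proof -
  define F1 where "F1 = {k\<in>F. k \<ge> \<lceil>z\<rceil>}"
  define F2 where "F2 = {k\<in>F. k < \<lceil>z\<rceil>}"
  have split: "F = F1 \<union> F2" "F1 \<inter> F2 = {}" and fin12: "finite F1" "finite F2"
    using fin by (auto simp: F1_def F2_def)
  have "(\<Sum>k\<in>F1. (1 + \<bar>z - real_of_int k\<bar>) powr (-r)) \<le> (r/(r-1)) * (1+0) powr (1-r)"
  proof (rule sum_powr_inj_le[OF fin12(1) _ r, of "\<lambda>k. nat (k - \<lceil>z\<rceil>)"])
    show "inj_on (\<lambda>k. nat (k - \<lceil>z\<rceil>)) F1" by (auto simp: F1_def inj_on_def)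
    show "0 + real (nat (k - \<lceil>z\<rceil>)) \<le> \<bar>z - real_of_int k\<bar>" if "k \<in> F1" for k
    proof -
      have "\<lceil>z\<rceil> \<le> k" using that by (simp add: F1_def)
      then have "real (nat (k - \<lceil>z\<rceil>)) = real_of_int k - real_of_int \<lceil>z\<rceil>" by simp
      with le_of_int_ceiling[of z] show ?thesis by linarith
    qed
  qed simp
  moreover have "(\<Sum>k\<in>F2. (1 + \<bar>z - real_of_int k\<bar>) powr (-r)) \<le> (r/(r-1)) * (1+0) powr (1-r)"
  proof (rule sum_powr_inj_le[OF fin12(2) _ r, of "\<lambda>k. nat (\<lceil>z\<rceil> - 1 - k)"])
    show "inj_on (\<lambda>k. nat (\<lceil>z\<rceil> - 1 - k)) F2" by (auto simp: F2_def inj_on_def)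
    show "0 + real (nat (\<lceil>z\<rceil> - 1 - k)) \<le> \<bar>z - real_of_int k\<bar>" if "k \<in> F2" for k
    proof -
      have "k \<le> \<lceil>z\<rceil> - 1" "\<lceil>z\<rceil> - 1 < z" using that by (auto simp: F2_def) linarith
      then show ?thesis by simp
    qed
  qed simp
  ultimately show ?thesis
    using sum.union_disjoint[OF fin12 split(2), of "\<lambda>k. (1 + \<bar>z - real_of_int k\<bar>) powr (-r)"] split(1)
    by simp
qed

lemma set_integral_le_integral:
  fixes h :: "'a \<Rightarrow> real"
  assumes "integrable M h" "\<And>x. 0 \<le> h x" "A \<in> sets M"
  shows "(LINT x:A|M. h x) \<le> (LINT x|M. h x)"
  unfolding set_lebesgue_integral_def
  using assms by (intro integral_mono integrable_mult_indicator) (auto simp: indicator_def)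

lemma set_integral_sum:
  fixes f :: "'i \<Rightarrow> 'a \<Rightarrow> real"
  assumes "\<And>i. i \<in> I \<Longrightarrow> set_integrable M S (f i)"
  shows "set_integrable M S (\<lambda>x. \<Sum>i\<in>I. f i x) \<and>
         (LINT x:S|M. \<Sum>i\<in>I. f i x) = (\<Sum>i\<in>I. LINT x:S|M. f i x)"
  using assms unfolding set_integrable_def set_lebesgue_integral_def
  by (simp add: sum_distrib_left integral_sum)

lemma summable_on_infsum_le_of_finite_sums_le:
  fixes f :: "'a \<Rightarrow> real"
  assumes nonneg: "\<And>k. 0 \<le> f k" and bound: "\<And>F. finite F \<Longrightarrow> sum f F \<le> B"
  shows "f summable_on UNIV \<and> infsum f UNIV \<le> B"
proof -
  have "f summable_on UNIV"
    by (rule nonneg_bdd_above_summable_on) (use nonneg bound in \<open>auto simp: bdd_above_def\<close>)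
  moreover have "infsum f UNIV \<le> B"
    by (rule infsum_le_finite_sums[OF \<open>f summable_on UNIV\<close>]) (use bound in auto)
  ultimately show ?thesis by simp
qed

section \<open>Logarithmic weights\<close>

lemma one_plus_ln_le_sqrt:
  fixes u :: real
  assumes "0 \<le> u"
  shows "1 + ln (1+u) \<le> 2 * (1+u) powr (1/2)"
proof -
  define w where "w = (1+u) powr (1/2)"
  have w: "1 \<le> w" unfolding w_def using assms by (simp add: ge_one_powr_ge_zero)
  have "ln (1+u) = ln (w powr 2)"
    unfolding w_def using assms by (simp only: powr_powr) (simp add: powr_one_gt_zero_iff)
  also have "\<dots> = 2 * ln w" using w by (simp only: ln_powr)
  also have "\<dots> \<le> 2 * (w - 1)" using w ln_le_minus_one[of w] by simp
  finally show ?thesis unfolding w_def by simp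
qed

text \<open>The exponent \<open>1/4\<close> of the extra factors is chosen small enough to be absorbed by the decay
  rate \<open>5/2\<close> of \<open>\<psi>\<^sub>H\<close>.\<close>
lemma sqrt_ln_le_weight_product:
  fixes a b x J :: real and k :: int
  assumes a: "0 < a" "a \<le> b" and b: "1 \<le> b" and J: "0 \<le> J"
  shows "sqrt (ln (3 + J + \<bar>real_of_int k\<bar>)) \<le>
     2 * sqrt (ln (3 + J + b)) * (1+\<bar>x\<bar>) powr (1/4) * (1 + \<bar>a*x - real_of_int k\<bar>) powr (1/4)"
proof -
  define d where "d = \<bar>a*x - real_of_int k\<bar>"
  define L where "L = ln (3 + J + b)"
  have d: "0 \<le> d" unfolding d_def by simp
  have L: "1 \<le> L"
  proof -
    have "exp 1 \<le> (3::real)" using exp_le by simp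
    also have "\<dots> \<le> 3 + J + b" using J b by simp
    finally show ?thesis unfolding L_def using b J by (simp add: ln_ge_iff)
  qed
  have k: "\<bar>real_of_int k\<bar> \<le> b * \<bar>x\<bar> + d"
  proof -
    have "\<bar>a*x\<bar> \<le> b * \<bar>x\<bar>" using a by (simp add: abs_mult mult_right_mono)
    then show ?thesis unfolding d_def by linarith
  qed
  have "3 + J + \<bar>real_of_int k\<bar> \<le> (3 + J + b) * (1+\<bar>x\<bar>) * (1+d)"
  proof -
    have "(3 + J + b) * (1+\<bar>x\<bar>) * (1+d) = (3 + J + b) * (1+\<bar>x\<bar>) + (3 + J + b) * (1+\<bar>x\<bar>) * d"
      by (simp add: algebra_simps)
    moreover have "3 + J + b * \<bar>x\<bar> \<le> (3 + J + b) * (1+\<bar>x\<bar>)"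
      using J b by (simp add: algebra_simps)
    moreover have "1 * 1 * d \<le> (3 + J + b) * (1+\<bar>x\<bar>) * d"
      using J b d by (intro mult_mono) auto
    ultimately show ?thesis using k by linarith
  qed
  then have "ln (3 + J + \<bar>real_of_int k\<bar>) \<le> ln ((3 + J + b) * (1+\<bar>x\<bar>) * (1+d))"
    using J by simp
  also have "\<dots> = L + ln (1+\<bar>x\<bar>) + ln (1+d)" unfolding L_def using J b d by (simp add: ln_mult)
  also have "\<dots> \<le> L * (1 + ln (1+\<bar>x\<bar>)) * (1 + ln (1+d))"
  proof -
    have "0 \<le> ln (1+\<bar>x\<bar>)" "0 \<le> ln (1+d)" using d by auto
    then have "ln (1+\<bar>x\<bar>) \<le> L * ln (1+\<bar>x\<bar>)" "ln (1+d) \<le> L * ln (1+d)"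
        "0 \<le> L * ln (1+\<bar>x\<bar>) * ln (1+d)"
      using L by (auto simp: mult_le_cancel_right1)
    then show ?thesis by (simp add: algebra_simps)
  qed
  also have "\<dots> \<le> L * (2 * (1+\<bar>x\<bar>) powr (1/2)) * (2 * (1+d) powr (1/2))"
    using one_plus_ln_le_sqrt[of "\<bar>x\<bar>"] one_plus_ln_le_sqrt[of d] d L
    by (intro mult_mono) (auto intro: add_nonneg_nonneg)
  finally have "ln (3 + J + \<bar>real_of_int k\<bar>) \<le> 4 * L * ((1+\<bar>x\<bar>) powr (1/2) * (1+d) powr (1/2))"
    by (simp add: algebra_simps)
  then have "sqrt (ln (3 + J + \<bar>real_of_int k\<bar>)) \<le> sqrt (4 * L * ((1+\<bar>x\<bar>) powr (1/2) * (1+d) powr (1/2)))"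
    by simp
  also have "\<dots> = 2 * sqrt L * (sqrt ((1+\<bar>x\<bar>) powr (1/2)) * sqrt ((1+d) powr (1/2)))"
    by (simp add: real_sqrt_mult)
  also have "sqrt ((1+\<bar>x\<bar>) powr (1/2)) = (1+\<bar>x\<bar>) powr (1/4)"
    using powr_half_sqrt_powr[of _ "1/2"] by (simp add: powr_powr)
  also have "sqrt ((1+d) powr (1/2)) = (1+d) powr (1/4)"
    using powr_half_sqrt_powr[of "1+d" "1/2"] d by simp
  finally show ?thesis unfolding L_def d_def by (simp add: mult.assoc)
qed

section \<open>Schwartz functions\<close>

lemma schwartz_isCont:
  assumes "schwartz f"
  shows "isCont f x"
proof -
  have "((deriv ^^ 0) f) differentiable (at x)" using assms unfolding schwartz_def by blast
  then show ?thesis by (simp add: differentiable_imp_continuous_within)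
qed

lemma schwartz_continuous_on: "schwartz f \<Longrightarrow> continuous_on A f"
  by (simp add: continuous_at_imp_continuous_on schwartz_isCont)

lemma schwartz_borel_measurable: "schwartz f \<Longrightarrow> f \<in> borel_measurable borel"
  by (rule borel_measurable_continuous_onI) (rule schwartz_continuous_on)

lemma schwartz_decay:
  assumes "schwartz f"
  shows "\<exists>M>0. \<forall>x. \<bar>f x\<bar> \<le> M * (1 + \<bar>x\<bar>) powr (- real n)"
proof -
  have "\<forall>m. \<exists>B. \<forall>x. \<bar>x\<bar> ^ m * \<bar>f x\<bar> \<le> B"
    using assms unfolding schwartz_def by (metis funpow_0)
  then obtain B0 Bn where B0: "\<And>x. \<bar>x\<bar> ^ 0 * \<bar>f x\<bar> \<le> B0" and Bn: "\<And>x. \<bar>x\<bar> ^ n * \<bar>f x\<bar> \<le> Bn"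
    by metis
  define M where "M = 2^n * (\<bar>B0\<bar> + \<bar>Bn\<bar>) + 1"
  have "\<bar>f x\<bar> \<le> M * (1 + \<bar>x\<bar>) powr (- real n)" for x
  proof -
    have binomial: "(1 + \<bar>x\<bar>) ^ n \<le> 2^n * (1 + \<bar>x\<bar> ^ n)"
    proof (cases "\<bar>x\<bar> \<le> 1")
      case True
      then have "(1 + \<bar>x\<bar>) ^ n \<le> 2 ^ n" by (intro power_mono) auto
      moreover have "(0::real) \<le> 2^n * \<bar>x\<bar> ^ n" by simp
      ultimately show ?thesis by (simp only: distrib_left mult_1_right)
    next
      case False
      then have "(1 + \<bar>x\<bar>) ^ n \<le> (2 * \<bar>x\<bar>) ^ n" by (intro power_mono) auto
      also have "\<dots> = 2^n * \<bar>x\<bar> ^ n" by (simp add: power_mult_distrib)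
      also have "\<dots> \<le> 2^n * (1 + \<bar>x\<bar> ^ n)" by simp
      finally show ?thesis .
    qed
    have "(1 + \<bar>x\<bar>) ^ n * \<bar>f x\<bar> \<le> 2^n * (1 + \<bar>x\<bar> ^ n) * \<bar>f x\<bar>"
      using binomial by (simp add: mult_right_mono)
    also have "\<dots> = 2^n * (\<bar>x\<bar> ^ 0 * \<bar>f x\<bar> + \<bar>x\<bar> ^ n * \<bar>f x\<bar>)"
      by (simp add: algebra_simps)
    also have "\<dots> \<le> 2^n * (\<bar>B0\<bar> + \<bar>Bn\<bar>)"
      using B0[of x] Bn[of x] by (intro mult_left_mono add_mono) auto
    also have "\<dots> \<le> M" unfolding M_def by simp
    finally have bound: "(1 + \<bar>x\<bar>) ^ n * \<bar>f x\<bar> \<le> M" .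
    have pos: "0 < (1 + \<bar>x\<bar>) ^ n" by simp
    have "\<bar>f x\<bar> = ((1 + \<bar>x\<bar>) ^ n * \<bar>f x\<bar>) / (1 + \<bar>x\<bar>) ^ n" using pos by simp
    also have "\<dots> \<le> M / (1 + \<bar>x\<bar>) ^ n" by (rule divide_right_mono) (use bound in auto)
    also have "\<dots> = M * (1 + \<bar>x\<bar>) powr (- real n)"
      by (simp add: powr_minus powr_realpow divide_inverse)
    finally show ?thesis .
  qed
  moreover have "M > 0" unfolding M_def by (intro add_nonneg_pos) auto
  ultimately show ?thesis by blast
qed

lemma schwartz_integrable_abs_power_mult:
  assumes "schwartz f"
  shows "integrable lborel (\<lambda>x. \<bar>x\<bar> ^ n * \<bar>f x\<bar>)"
proof -
  obtain M where M: "M > 0" "\<And>x. \<bar>f x\<bar> \<le> M * (1 + \<bar>x\<bar>) powr (- real (n+2))"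
    using schwartz_decay[OF assms, of "n+2"] by blast
  show ?thesis
  proof (rule Bochner_Integration.integrable_bound)
  show "integrable lborel (\<lambda>x. M * (1 + \<bar>x\<bar>) powr (- 2))"
    using integrable_one_plus_abs_powr[of 2] by simp
  show "(\<lambda>x. \<bar>x\<bar> ^ n * \<bar>f x\<bar>) \<in> borel_measurable lborel"
    using schwartz_borel_measurable[OF assms] by measurable
  show "AE x in lborel. norm (\<bar>x\<bar> ^ n * \<bar>f x\<bar>) \<le> norm (M * (1 + \<bar>x\<bar>) powr (- 2))"
  proof (rule AE_I2)
    fix x :: real
    have "\<bar>x\<bar> ^ n * \<bar>f x\<bar> \<le> (1 + \<bar>x\<bar>) powr real n * (M * (1 + \<bar>x\<bar>) powr (- real (n+2)))"
      using M(2)[of x] by (intro mult_mono) (auto simp: powr_realpow power_mono)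
    also have "\<dots> = M * (1 + \<bar>x\<bar>) powr (- 2)"
      by (simp add: powr_add[symmetric] algebra_simps)
    finally show "norm (\<bar>x\<bar> ^ n * \<bar>f x\<bar>) \<le> norm (M * (1 + \<bar>x\<bar>) powr (- 2))"
      using M(1) by simp
  qed
  qed
qed

lemma schwartz_integrable_abs:
  assumes "schwartz f"
  shows "integrable lborel (\<lambda>x. \<bar>f x\<bar>)"
  using schwartz_integrable_abs_power_mult[OF assms, of 0] by simp

lemma schwartz_integrable:
  assumes "schwartz f"
  shows "integrable lborel f"
  using schwartz_integrable_abs_power_mult[OF assms, of 0] schwartz_borel_measurable[OF assms]
    integrable_abs_iff[of f lborel]
  by simp

lemma schwartz_integrable_mult_id:
  assumes "schwartz f"
  shows "integrable lborel (\<lambda>x. x * f x)"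
proof -
  have "integrable lborel (\<lambda>x. \<bar>x * f x\<bar>)"
    using schwartz_integrable_abs_power_mult[OF assms, of 1] by (simp add: abs_mult)
  moreover have "(\<lambda>x. x * f x) \<in> borel_measurable lborel"
    using schwartz_borel_measurable[OF assms] by measurable
  ultimately show ?thesis using integrable_abs_iff by blast
qed

lemma integral_eq_0_of_fourier_0:
  assumes "fourier f 0 = 0"
  shows "(LINT x|lborel. f x) = 0"
proof -
  have "complex_of_real (LINT x|lborel. f x) = fourier f 0"
    unfolding fourier_def by (simp add: integral_complex_of_real)
  then show ?thesis using assms by simp
qed

lemma integral_mult_sin_eq_0_of_fourier_eq_0:
  assumes f: "schwartz f" and zero: "fourier f \<xi> = 0"
  shows "(LINT x|lborel. f x * sin (\<xi> * x)) = 0"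
proof -
  have "complex_integrable lborel (\<lambda>x. complex_of_real (f x) * cis (- \<xi> * x))"
  proof (rule Bochner_Integration.integrable_bound[OF schwartz_integrable[OF f]])
    show "(\<lambda>x. complex_of_real (f x) * cis (- \<xi> * x)) \<in> borel_measurable lborel"
      unfolding measurable_lborel2
      by (intro borel_measurable_continuous_onI continuous_intros schwartz_continuous_on[OF f])
  qed (simp add: norm_mult)
  then have "Im (fourier f \<xi>) = (LINT x|lborel. Im (complex_of_real (f x) * cis (- \<xi> * x)))"
    unfolding fourier_def by (rule integral_Im[symmetric])
  then show ?thesis using zero by simp
qed

text \<open>The first moment is the derivative at \<open>0\<close> of \<open>\<xi> \<mapsto> \<integral> f(x) sin(\<xi> x) dx\<close>, which vanishes
  identically near \<open>0\<close>; the difference quotients along \<open>\<xi> = a/(n+2)\<close> are dominated by \<open>\<bar>x f(x)\<bar>\<close>.\<close>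
lemma first_moment_eq_0_of_fourier_vanishing:
  assumes f: "schwartz f" and a: "a > 0" and zero: "\<And>\<xi>. \<bar>\<xi>\<bar> < a \<Longrightarrow> fourier f \<xi> = 0"
  shows "(LINT x|lborel. x * f x) = 0"
proof -
  define h where "h = (\<lambda>n::nat. a / (real n + 2))"
  have hpos: "h n > 0" and hlt: "h n < a" for n
    using a by (simp_all add: h_def field_simps add_pos_nonneg)
  have h0: "h \<longlonglongrightarrow> 0" unfolding h_def by real_asymp
  have fm[measurable]: "f \<in> borel_measurable borel" by (rule schwartz_borel_measurable[OF f])
  have "(\<lambda>n. LINT x|lborel. f x * sin (h n * x) / h n) \<longlonglongrightarrow> (LINT x|lborel. x * f x)"
  proof (rule integral_dominated_convergence[where w = "\<lambda>x. \<bar>x\<bar> ^ 1 * \<bar>f x\<bar>"])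
    show "integrable lborel (\<lambda>x. \<bar>x\<bar> ^ 1 * \<bar>f x\<bar>)" by (rule schwartz_integrable_abs_power_mult[OF f])
    show "AE x in lborel. norm (f x * sin (h n * x) / h n) \<le> \<bar>x\<bar> ^ 1 * \<bar>f x\<bar>" for n
    proof (rule AE_I2)
      fix x
      have "\<bar>sin (h n * x)\<bar> \<le> \<bar>h n * x\<bar>" by (rule abs_sin_x_le_abs_x)
      then have "\<bar>sin (h n * x)\<bar> / h n \<le> \<bar>x\<bar>"
        using hpos[of n] by (simp add: abs_mult divide_le_eq mult.commute)
      then have "\<bar>f x\<bar> * (\<bar>sin (h n * x)\<bar> / h n) \<le> \<bar>f x\<bar> * \<bar>x\<bar>" by (rule mult_left_mono) simp
      then show "norm (f x * sin (h n * x) / h n) \<le> \<bar>x\<bar> ^ 1 * \<bar>f x\<bar>"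
        using hpos[of n] by (simp add: abs_mult mult.commute)
    qed
    show "AE x in lborel. (\<lambda>n. f x * sin (h n * x) / h n) \<longlonglongrightarrow> x * f x"
    proof (rule AE_I2)
      fix x
      have "((\<lambda>y. sin (y * x)) has_real_derivative x) (at 0)"
        by (auto intro!: derivative_eq_intros)
      then have "((\<lambda>y. sin (y * x) / y) \<longlongrightarrow> x) (at 0)"
        unfolding has_field_derivative_iff by simp
      moreover have "filterlim h (at 0) sequentially"
        using h0 hpos by (auto simp: filterlim_at intro!: always_eventually) (metis less_irrefl)
      ultimately have "(\<lambda>n. sin (h n * x) / h n) \<longlonglongrightarrow> x"
        by (rule filterlim_compose)
      then have "(\<lambda>n. f x * (sin (h n * x) / h n)) \<longlonglongrightarrow> f x * x" by (intro tendsto_mult tendsto_const)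
      then show "(\<lambda>n. f x * sin (h n * x) / h n) \<longlonglongrightarrow> x * f x" by (simp add: mult.commute)
    qed
  qed measurable
  moreover have "(\<lambda>n. LINT x|lborel. f x * sin (h n * x) / h n) = (\<lambda>n. 0)"
  proof
    fix n
    have "\<bar>h n\<bar> < a" using hlt[of n] hpos[of n] by simp
    then show "(LINT x|lborel. f x * sin (h n * x) / h n) = 0"
      using integral_mult_sin_eq_0_of_fourier_eq_0[OF f zero] by simp
  qed
  ultimately show ?thesis using LIMSEQ_unique[OF tendsto_const] by metis
qed

section \<open>The Riemann--Liouville integral\<close>

text \<open>\<open>rl_integral e f\<close> is the Riemann--Liouville integral of order \<open>e + 1\<close> without its normalising
  factor, so that \<open>\<psi>\<^sub>H = rl_integral (H - 3/2) \<psi> / \<Gamma>(H - 1/2)\<close>.\<close>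
definition rl_kernel :: "real \<Rightarrow> real \<Rightarrow> real \<Rightarrow> real" where
  "rl_kernel e t x = (if x < t then (t - x) powr e else 0)"

definition rl_integral :: "real \<Rightarrow> (real \<Rightarrow> real) \<Rightarrow> real \<Rightarrow> real" where
  "rl_integral e f t = (LINT x|lborel. rl_kernel e t x * f x)"

lemma psiH_eq_rl_integral: "psiH H f t = rl_integral (H - 3/2) f t / Gamma (H - 1/2)"
  unfolding psiH_def rl_integral_def rl_kernel_def by (simp add: if_distrib cong: if_cong)

lemma rl_kernel_measurable[measurable]: "(\<lambda>x. rl_kernel e t x) \<in> borel_measurable borel"
  unfolding rl_kernel_def by measurable

lemma rl_kernel_nonneg: "0 \<le> rl_kernel e t x"
  by (simp add: rl_kernel_def)

lemma rl_kernel_le: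
  assumes "e < 0"
  shows "rl_kernel e t x \<le> indicator {t-1..t} x * (t-x) powr e + indicator {..t} x"
proof (cases "x < t \<and> 1 < t - x")
  case True
  then have "(t-x) powr e \<le> (t-x) powr 0" using assms by (intro powr_mono) auto
  then show ?thesis using True by (simp add: rl_kernel_def indicator_def)
qed (auto simp: rl_kernel_def indicator_def)

text \<open>The singularity of the kernel is integrable on \<open>[t - 1, t]\<close>, where \<open>h\<close> is bounded; away from it
  the kernel is at most \<open>1\<close>.\<close>
lemma integrable_rl_kernel_mult_le:
  fixes h :: "real \<Rightarrow> real"
  assumes e: "-1 < e" "e < 0" and hm[measurable]: "h \<in> borel_measurable borel"
    and nonneg: "\<And>x. 0 \<le> h x" and hi: "integrable lborel h"
    and bound: "\<And>x. x \<in> {t-1..t} \<Longrightarrow> h x \<le> S"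
  shows "integrable lborel (\<lambda>x. rl_kernel e t x * h x) \<and>
         (LINT x|lborel. rl_kernel e t x * h x) \<le> S/(e+1) + (LINT x:{..t}|lborel. h x)"
proof -
  define B where "B = (\<lambda>x. S * (indicator {t-1..t} x * (t-x) powr e) + indicator {..t} x * h x)"
  have k: "set_integrable lborel {t-1..t} (\<lambda>x. (t-x) powr e)" "(LINT x:{t-1..t}|lborel. (t-x) powr e) = 1/(e+1)"
    using set_integral_powr_diff_unit_interval[OF e(1), of t] by auto
  have i1: "integrable lborel (\<lambda>x. indicator {t-1..t} x * (t-x) powr e)"
    using k(1) unfolding set_integrable_def by simp
  have i2: "integrable lborel (\<lambda>x. indicator {..t} x * h x)"
    using integrable_mult_indicator[of "{..t}" lborel h] hi by simp
  have iB: "integrable lborel B" unfolding B_def using i1 i2 by auto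
  have pointwise: "rl_kernel e t x * h x \<le> B x" for x
  proof -
    have "rl_kernel e t x * h x \<le> (indicator {t-1..t} x * (t-x) powr e + indicator {..t} x) * h x"
      using rl_kernel_le[OF e(2), of t x] nonneg[of x] by (rule mult_right_mono)
    also have "\<dots> = indicator {t-1..t} x * (t-x) powr e * h x + indicator {..t} x * h x"
      by (simp add: algebra_simps)
    also have "indicator {t-1..t} x * (t-x) powr e * h x \<le> indicator {t-1..t} x * (t-x) powr e * S"
      using bound[of x] by (auto simp: indicator_def intro!: mult_left_mono)
    finally show ?thesis unfolding B_def by (simp add: algebra_simps)
  qed
  have ik: "integrable lborel (\<lambda>x. rl_kernel e t x * h x)"
  proof (rule Bochner_Integration.integrable_bound[OF iB])
    show "AE x in lborel. norm (rl_kernel e t x * h x) \<le> norm (B x)"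
      using pointwise rl_kernel_nonneg nonneg
      by (intro AE_I2) (smt (verit, ccfv_threshold) real_norm_def zero_le_mult_iff)
  qed measurable
  have "(LINT x|lborel. rl_kernel e t x * h x) \<le> (LINT x|lborel. B x)"
    by (rule integral_mono[OF ik iB pointwise])
  also have "(LINT x|lborel. B x) = S * (1/(e+1)) + (LINT x:{..t}|lborel. h x)"
    unfolding B_def using i1 i2 k(2) by (simp add: set_lebesgue_integral_def)
  finally show ?thesis using ik by simp
qed

lemma powr_diff_taylor_remainder_le:
  fixes e t x :: real
  assumes e: "e < 0" and t: "t > 0" and x: "x < t/2"
  shows "\<bar>(t-x) powr e - (t powr e - e * t powr (e-1) * x)\<bar> \<le> e*(e-1)/2 * (t/2) powr (e-2) * x^2"
proof (cases "x = 0")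
  case False
  define diff where "diff = (\<lambda>m::nat. \<lambda>y::real.
    if m = 0 then (t-y) powr e else if m = 1 then -e*(t-y) powr (e-1) else e*(e-1)*(t-y) powr (e-2))"
  have D: "\<forall>m y. m < 2 \<and> min x 0 \<le> y \<and> y \<le> t/2 \<longrightarrow> DERIV (diff m) y :> diff (Suc m) y"
  proof (intro allI impI)
    fix m :: nat and y :: real
    assume my: "m < 2 \<and> min x 0 \<le> y \<and> y \<le> t/2"
    then have ty: "0 < t - y" using t by simp
    show "DERIV (diff m) y :> diff (Suc m) y"
    proof (cases "m = 0")
      case True
      have "((\<lambda>y. (t-y) powr e) has_real_derivative (e * (t-y) powr (e-1) * (0 - 1))) (at y)"
        using ty by (auto intro!: derivative_eq_intros)
      then show ?thesis using True unfolding diff_def by (simp add: algebra_simps)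
    next
      case False
      then have "m = 1" using my by simp
      have "((\<lambda>y. -e*(t-y) powr (e-1)) has_real_derivative (-e * ((e-1) * (t-y) powr (e-1-1) * (0 - 1)))) (at y)"
        using ty by (auto intro!: derivative_eq_intros)
      then show ?thesis using \<open>m = 1\<close> unfolding diff_def by (simp add: algebra_simps)
    qed
  qed
  obtain \<xi> where xi: "if x < 0 then x < \<xi> \<and> \<xi> < 0 else 0 < \<xi> \<and> \<xi> < x"
     "(t-x) powr e = (\<Sum>m<2. diff m 0 / fact m * (x - 0)^m) + diff 2 \<xi> / fact 2 * (x - 0)^2"
    using Taylor[of 2 diff "\<lambda>y. (t-y) powr e" "min x 0" "t/2" 0 x] D False x t
    by (auto simp: diff_def)
  have remainder: "(t-x) powr e - (t powr e - e * t powr (e-1) * x) = e*(e-1)*(t-\<xi>) powr (e-2) / 2 * x^2"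
    using xi(2) by (simp add: diff_def numeral_2_eq_2 lessThan_Suc)
  have "(t-\<xi>) powr (e-2) \<le> (t/2) powr (e-2)"
    using xi(1) x t e by (intro powr_mono2') (auto split: if_splits)
  moreover have "0 \<le> e*(e-1)" using e by (simp add: mult_nonpos_nonpos)
  ultimately have "e*(e-1)*(t-\<xi>) powr (e-2) \<le> e*(e-1)*(t/2) powr (e-2)" by (rule mult_left_mono)
  then show ?thesis
    unfolding remainder using \<open>0 \<le> e*(e-1)\<close> by (simp add: mult_right_mono)
qed (use e in simp)

text \<open>The subtracted first-order Taylor polynomial of the kernel integrates to zero against an \<open>f\<close>
  whose moments of order \<open>0\<close> and \<open>1\<close> vanish.\<close>
lemma abs_rl_kernel_mult_sub_taylor_le:
  fixes e t x :: real and f :: "real \<Rightarrow> real"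
  assumes e: "-1 < e" "e < 0" and t: "1 \<le> t"
  shows "\<bar>rl_kernel e t x * f x - (t powr e * f x - e * t powr (e-1) * (x * f x))\<bar>
      \<le> indicator {..<t/2} x * (e*(e-1)/2 * (t/2) powr (e-2) * (\<bar>x\<bar>^2 * \<bar>f x\<bar>))
        + rl_kernel e t x * (indicator {t/2..} x * \<bar>f x\<bar>)
        + indicator {t/2..} x * ((1 + \<bar>x\<bar>) * \<bar>f x\<bar>)"
proof (cases "x < t/2")
  case True
  have "rl_kernel e t x = (t-x) powr e" using True t by (simp add: rl_kernel_def)
  then have "rl_kernel e t x * f x - (t powr e * f x - e * t powr (e-1) * (x * f x))
      = f x * ((t-x) powr e - (t powr e - e * t powr (e-1) * x))"
    by (simp add: algebra_simps)
  then have "\<bar>rl_kernel e t x * f x - (t powr e * f x - e * t powr (e-1) * (x * f x))\<bar>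
      = \<bar>f x\<bar> * \<bar>(t-x) powr e - (t powr e - e * t powr (e-1) * x)\<bar>"
    by (simp add: abs_mult)
  also have "\<dots> \<le> \<bar>f x\<bar> * (e*(e-1)/2 * (t/2) powr (e-2) * x^2)"
    using powr_diff_taylor_remainder_le[of e t x] e t True by (intro mult_left_mono) auto
  also have "\<dots> = indicator {..<t/2} x * (e*(e-1)/2 * (t/2) powr (e-2) * (\<bar>x\<bar>^2 * \<bar>f x\<bar>))"
    using True by simp
  finally show ?thesis using True by simp
next
  case False
  have "t powr e \<le> 1" "t powr (e-1) \<le> 1"
    using t e powr_mono[of e 0 t] powr_mono[of "e-1" 0 t] by auto
  have "\<bar>t powr e * f x - e * t powr (e-1) * (x * f x)\<bar>
      \<le> \<bar>t powr e * f x\<bar> + \<bar>e * t powr (e-1) * (x * f x)\<bar>"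
    by (rule abs_triangle_ineq4)
  also have "\<dots> = t powr e * \<bar>f x\<bar> + \<bar>e\<bar> * t powr (e-1) * (\<bar>x\<bar> * \<bar>f x\<bar>)"
    by (simp add: abs_mult)
  also have "\<dots> \<le> 1 * \<bar>f x\<bar> + 1 * 1 * (\<bar>x\<bar> * \<bar>f x\<bar>)"
    using \<open>t powr e \<le> 1\<close> \<open>t powr (e-1) \<le> 1\<close> e by (intro add_mono mult_mono) auto
  finally have taylor: "\<bar>t powr e * f x - e * t powr (e-1) * (x * f x)\<bar> \<le> (1 + \<bar>x\<bar>) * \<bar>f x\<bar>"
    by (simp add: algebra_simps)
  have "\<bar>rl_kernel e t x * f x - (t powr e * f x - e * t powr (e-1) * (x * f x))\<bar>
      \<le> rl_kernel e t x * \<bar>f x\<bar> + \<bar>t powr e * f x - e * t powr (e-1) * (x * f x)\<bar>"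
    using abs_triangle_ineq4[of "rl_kernel e t x * f x"] rl_kernel_nonneg[of e t x] by (simp add: abs_mult)
  then show ?thesis using False taylor by simp
qed

context
  fixes f :: "real \<Rightarrow> real" and M e :: real
  assumes f: "schwartz f" and M: "M > 0" and decay: "\<And>x. \<bar>f x\<bar> \<le> M * (1 + \<bar>x\<bar>) powr (-6)"
    and e: "-1 < e" "e < 0"
begin

lemma abs_le_decay_constant: "\<bar>f x\<bar> \<le> M"
proof -
  have "(1 + \<bar>x\<bar>) powr (-6) \<le> (1 + \<bar>x\<bar>) powr 0" by (rule powr_mono) auto
  then have "(1 + \<bar>x\<bar>) powr (-6) \<le> 1" by (simp add: add_nonneg_eq_0_iff)
  then have "M * (1 + \<bar>x\<bar>) powr (-6) \<le> M" using M by (simp add: mult_left_le)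
  then show ?thesis using decay[of x] by simp
qed

lemma abs_rl_integral_le_integral:
  "integrable lborel (\<lambda>x. rl_kernel e t x * \<bar>f x\<bar>)"
  "integrable lborel (\<lambda>x. rl_kernel e t x * f x)"
  "\<bar>rl_integral e f t\<bar> \<le> (LINT x|lborel. rl_kernel e t x * \<bar>f x\<bar>)"
proof -
  show i: "integrable lborel (\<lambda>x. rl_kernel e t x * \<bar>f x\<bar>)"
    using integrable_rl_kernel_mult_le[OF e borel_measurable_abs[OF schwartz_borel_measurable[OF f]] _ schwartz_integrable_abs[OF f], of t M]
      abs_le_decay_constant
    by auto
  have fm[measurable]: "f \<in> borel_measurable borel" by (rule schwartz_borel_measurable[OF f])
  show "integrable lborel (\<lambda>x. rl_kernel e t x * f x)"
    by (rule Bochner_Integration.integrable_bound[OF i]) (auto simp: abs_mult)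
  have "\<bar>rl_integral e f t\<bar> \<le> (LINT x|lborel. norm (rl_kernel e t x * f x))"
    using integral_norm_bound[of lborel "\<lambda>x. rl_kernel e t x * f x"] by (simp add: rl_integral_def)
  also have "\<dots> = (LINT x|lborel. rl_kernel e t x * \<bar>f x\<bar>)"
    by (rule Bochner_Integration.integral_cong) (auto simp: abs_mult rl_kernel_nonneg)
  finally show "\<bar>rl_integral e f t\<bar> \<le> (LINT x|lborel. rl_kernel e t x * \<bar>f x\<bar>)" .
qed

lemma abs_rl_integral_le: "\<bar>rl_integral e f t\<bar> \<le> M/(e+1) + (LINT x|lborel. \<bar>f x\<bar>)"
proof -
  have "(LINT x|lborel. rl_kernel e t x * \<bar>f x\<bar>) \<le> M/(e+1) + (LINT x:{..t}|lborel. \<bar>f x\<bar>)"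
    using integrable_rl_kernel_mult_le[OF e borel_measurable_abs[OF schwartz_borel_measurable[OF f]] _ schwartz_integrable_abs[OF f], of t M]
      abs_le_decay_constant
    by auto
  also have "(LINT x:{..t}|lborel. \<bar>f x\<bar>) \<le> (LINT x|lborel. \<bar>f x\<bar>)"
    by (rule set_integral_le_integral[OF schwartz_integrable_abs[OF f]]) auto
  finally show ?thesis using abs_rl_integral_le_integral(3)[of t] by linarith
qed

lemma abs_rl_integral_le_of_nonpos:
  assumes t: "t \<le> 0"
  shows "\<bar>rl_integral e f t\<bar> \<le> (M/(e+1) + M/5) * (1+\<bar>t\<bar>) powr (-5/2)"
proof -
  have near: "\<bar>f x\<bar> \<le> M * (1+\<bar>t\<bar>) powr (-6)" if "x \<in> {t-1..t}" for x
  proof -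
    have "(1 + \<bar>x\<bar>) powr (-6) \<le> (1+\<bar>t\<bar>) powr (-6)" using that t by (intro powr_mono2') auto
    then show ?thesis using decay[of x] M by (smt (verit, best) mult_left_mono)
  qed
  have "(LINT x|lborel. rl_kernel e t x * \<bar>f x\<bar>) \<le> M * (1+\<bar>t\<bar>) powr (-6)/(e+1) + (LINT x:{..t}|lborel. \<bar>f x\<bar>)"
    using integrable_rl_kernel_mult_le[OF e borel_measurable_abs[OF schwartz_borel_measurable[OF f]] _ schwartz_integrable_abs[OF f], of t "M * (1+\<bar>t\<bar>) powr (-6)"] near
    by auto
  also have "(LINT x:{..t}|lborel. \<bar>f x\<bar>) \<le> (LINT x:{..t}|lborel. M * ((1+\<bar>t\<bar>) + 1*(t-x)) powr (-6))"
  proof (rule set_integral_mono)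
    show "set_integrable lborel {..t} (\<lambda>x. \<bar>f x\<bar>)"
      unfolding set_integrable_def using integrable_mult_indicator[OF _ schwartz_integrable_abs[OF f], of "{..t}"] by simp
    show "set_integrable lborel {..t} (\<lambda>x. M * ((1+\<bar>t\<bar>) + 1*(t-x)) powr (-6))"
      using set_integral_powr_affine_atMost[of 1 "1+\<bar>t\<bar>" 6 t] by (auto intro: set_integrable_mult_right)
    show "\<bar>f x\<bar> \<le> M * ((1+\<bar>t\<bar>) + 1*(t-x)) powr (-6)" if "x \<in> {..t}" for x
      using that t decay[of x] by (simp add: add.assoc)
  qed
  also have "\<dots> = M * (1+\<bar>t\<bar>) powr (-5) / 5"
    using set_integral_powr_affine_atMost[of 1 "1+\<bar>t\<bar>" 6 t] by simp
  also have "M * (1+\<bar>t\<bar>) powr (-6)/(e+1) + M * (1+\<bar>t\<bar>) powr (-5) / 5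
      \<le> M * (1+\<bar>t\<bar>) powr (-5/2)/(e+1) + M * (1+\<bar>t\<bar>) powr (-5/2) / 5"
    using M e by (intro add_mono divide_right_mono mult_left_mono powr_mono) auto
  finally show ?thesis
    using abs_rl_integral_le_integral(3)[of t] by (simp add: algebra_simps add_divide_distrib)
qed

lemma set_integral_tail_le:
  fixes k :: nat
  assumes k: "k \<le> 1" and c: "0 \<le> c"
  shows "set_integrable lborel {c..} (\<lambda>x. (1 + \<bar>x\<bar>)^k * \<bar>f x\<bar>)"
    and "(LINT x:{c..}|lborel. (1 + \<bar>x\<bar>)^k * \<bar>f x\<bar>) \<le> M * (1+c) powr (-(5 - real k)) / (5 - real k)"
proof -
  have majorant: "set_integrable lborel {c..} (\<lambda>x. M * ((1+c) + 1*(x-c)) powr (-(6 - real k)))"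
      "(LINT x:{c..}|lborel. M * ((1+c) + 1*(x-c)) powr (-(6 - real k))) = M * ((1+c) powr (1-(6 - real k)) / (1*((6 - real k)-1)))"
    using set_integral_powr_affine_atLeast[of 1 "1+c" "6 - real k" c] k c
    by (auto intro: set_integrable_mult_right)
  have pointwise: "(1 + \<bar>x\<bar>)^k * \<bar>f x\<bar> \<le> M * ((1+c) + 1*(x-c)) powr (-(6 - real k))" if "x \<in> {c..}" for x
  proof -
    have "(1 + \<bar>x\<bar>)^k * \<bar>f x\<bar> \<le> (1 + \<bar>x\<bar>) powr real k * (M * (1 + \<bar>x\<bar>) powr (-6))"
      using decay[of x] by (intro mult_mono) (auto simp: powr_realpow)
    also have "\<dots> = M * (1 + \<bar>x\<bar>) powr (-(6 - real k))" by (simp add: powr_add[symmetric] algebra_simps)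
    finally show ?thesis using that c by simp
  qed
  have "integrable lborel (\<lambda>x. (1 + \<bar>x\<bar>)^k * \<bar>f x\<bar>)"
  proof (cases k)
    case (Suc m)
    then have "k = 1" using k by simp
    then show ?thesis
      using schwartz_integrable_abs[OF f] schwartz_integrable_abs_power_mult[OF f, of 1] by (simp add: distrib_right)
  qed (simp add: schwartz_integrable_abs[OF f])
  then show tail: "set_integrable lborel {c..} (\<lambda>x. (1 + \<bar>x\<bar>)^k * \<bar>f x\<bar>)"
    unfolding set_integrable_def by (intro integrable_mult_indicator) auto
  have "(LINT x:{c..}|lborel. (1 + \<bar>x\<bar>)^k * \<bar>f x\<bar>) \<le> (LINT x:{c..}|lborel. M * ((1+c) + 1*(x-c)) powr (-(6 - real k)))"
    by (rule set_integral_mono[OF tail majorant(1) pointwise])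
  then show "(LINT x:{c..}|lborel. (1 + \<bar>x\<bar>)^k * \<bar>f x\<bar>) \<le> M * (1+c) powr (-(5 - real k)) / (5 - real k)"
    using majorant(2) by (simp add: algebra_simps)
qed

lemma rl_integral_mult_tail_le:
  assumes t: "2 \<le> t"
  shows "integrable lborel (\<lambda>x. rl_kernel e t x * (indicator {t/2..} x * \<bar>f x\<bar>))"
    and "(LINT x|lborel. rl_kernel e t x * (indicator {t/2..} x * \<bar>f x\<bar>))
           \<le> M * (1+t/2) powr (-6) / (e+1) + M * (1+t/2) powr (-5) / 5"
proof -
  define h where "h = (\<lambda>x. indicator {t/2..} x * \<bar>f x\<bar>)"
  have hm[measurable]: "h \<in> borel_measurable borel"
    unfolding h_def using schwartz_borel_measurable[OF f] by measurable
  have hi: "integrable lborel h"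
    unfolding h_def using integrable_mult_indicator[OF _ schwartz_integrable_abs[OF f], of "{t/2..}"] by simp
  have near: "h x \<le> M * (1+t/2) powr (-6)" if "x \<in> {t-1..t}" for x
  proof (cases "t/2 \<le> x")
    case True
    have "(1 + \<bar>x\<bar>) powr (-6) \<le> (1+t/2) powr (-6)" using True t by (intro powr_mono2') auto
    then have "M * (1 + \<bar>x\<bar>) powr (-6) \<le> M * (1+t/2) powr (-6)" using M by simp
    then show ?thesis using decay[of x] True unfolding h_def by simp
  qed (use M in \<open>simp add: h_def\<close>)
  have split: "integrable lborel (\<lambda>x. rl_kernel e t x * h x)"
      "(LINT x|lborel. rl_kernel e t x * h x) \<le> M * (1+t/2) powr (-6) / (e+1) + (LINT x:{..t}|lborel. h x)"
    using integrable_rl_kernel_mult_le[OF e hm _ hi near] by (auto simp: h_def)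
  then show "integrable lborel (\<lambda>x. rl_kernel e t x * (indicator {t/2..} x * \<bar>f x\<bar>))"
    by (simp add: h_def)
  have "(LINT x:{..t}|lborel. h x) \<le> (LINT x|lborel. h x)"
    by (rule set_integral_le_integral[OF hi]) (auto simp: h_def)
  also have "(LINT x|lborel. h x) = (LINT x:{t/2..}|lborel. (1 + \<bar>x\<bar>)^0 * \<bar>f x\<bar>)"
    unfolding h_def set_lebesgue_integral_def by simp
  also have "\<dots> \<le> M * (1+t/2) powr (-5) / 5"
    using set_integral_tail_le(2)[of 0 "t/2"] t by simp
  finally show "(LINT x|lborel. rl_kernel e t x * (indicator {t/2..} x * \<bar>f x\<bar>))
      \<le> M * (1+t/2) powr (-6) / (e+1) + M * (1+t/2) powr (-5) / 5"
    using split(2) by (simp add: h_def)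
qed

lemma abs_rl_integral_le_of_ge_2:
  assumes t: "2 \<le> t" and moments: "(LINT x|lborel. f x) = 0" "(LINT x|lborel. x * f x) = 0"
  shows "\<bar>rl_integral e f t\<bar> \<le> e*(e-1)/2 * (t/2) powr (e-2) * (LINT x|lborel. \<bar>x\<bar>^2 * \<bar>f x\<bar>)
     + (M * (1+t/2) powr (-6) / (e+1) + M * (1+t/2) powr (-5) / 5) + M * (1+t/2) powr (-4) / 4"
proof -
  define c2 where "c2 = e*(e-1)/2 * (t/2) powr (e-2)"
  have c2: "0 \<le> c2" unfolding c2_def using e by (simp add: mult_nonpos_nonpos)
  have fm[measurable]: "f \<in> borel_measurable borel" by (rule schwartz_borel_measurable[OF f])
  define P where "P = (\<lambda>x. t powr e * f x - e * t powr (e-1) * (x * f x))"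
  have iP: "integrable lborel P" and P0: "(LINT x|lborel. P x) = 0"
    unfolding P_def using schwartz_integrable[OF f] schwartz_integrable_mult_id[OF f] moments by auto
  have iK: "integrable lborel (\<lambda>x. rl_kernel e t x * f x)" by (rule abs_rl_integral_le_integral(2))
  define B where "B = (\<lambda>x. indicator {..<t/2} x * (c2 * (\<bar>x\<bar>^2 * \<bar>f x\<bar>))
      + rl_kernel e t x * (indicator {t/2..} x * \<bar>f x\<bar>) + indicator {t/2..} x * ((1 + \<bar>x\<bar>)^1 * \<bar>f x\<bar>))"
  have pointwise: "\<bar>rl_kernel e t x * f x - P x\<bar> \<le> B x" for x
    using abs_rl_kernel_mult_sub_taylor_le[OF e, of t x f] t unfolding B_def P_def c2_def by simp
  have "integrable lborel (\<lambda>x. indicator {..<t/2} x *\<^sub>R (c2 * (\<bar>x\<bar>^2 * \<bar>f x\<bar>)))"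
    using schwartz_integrable_abs_power_mult[OF f, of 2] by (intro integrable_mult_indicator) auto
  then have i1: "integrable lborel (\<lambda>x. indicator {..<t/2} x * (c2 * (\<bar>x\<bar>^2 * \<bar>f x\<bar>)))"
    by simp
  have i3: "integrable lborel (\<lambda>x. indicator {t/2..} x * ((1 + \<bar>x\<bar>)^1 * \<bar>f x\<bar>))"
    using set_integral_tail_le(1)[of 1 "t/2"] t unfolding set_integrable_def by simp
  have iB: "integrable lborel B" unfolding B_def using i1 rl_integral_mult_tail_le(1)[OF t] i3 by auto
  have "\<bar>rl_integral e f t\<bar> = \<bar>LINT x|lborel. rl_kernel e t x * f x - P x\<bar>"
    unfolding rl_integral_def using iK iP P0 by simp
  also have "\<dots> \<le> (LINT x|lborel. \<bar>rl_kernel e t x * f x - P x\<bar>)"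
    using integral_norm_bound[of lborel "\<lambda>x. rl_kernel e t x * f x - P x"] by simp
  also have "\<dots> \<le> (LINT x|lborel. B x)"
    by (rule integral_mono[OF _ iB pointwise]) (use iK iP in auto)
  also have "(LINT x|lborel. B x) = c2 * (LINT x|lborel. indicator {..<t/2} x * (\<bar>x\<bar>^2 * \<bar>f x\<bar>))
      + (LINT x|lborel. rl_kernel e t x * (indicator {t/2..} x * \<bar>f x\<bar>))
      + (LINT x:{t/2..}|lborel. (1 + \<bar>x\<bar>)^1 * \<bar>f x\<bar>)"
    unfolding B_def set_lebesgue_integral_def using i1 rl_integral_mult_tail_le(1)[OF t] i3
    by (simp add: mult.left_commute)
  also have "\<dots> \<le> c2 * (LINT x|lborel. \<bar>x\<bar>^2 * \<bar>f x\<bar>)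
      + (M * (1+t/2) powr (-6) / (e+1) + M * (1+t/2) powr (-5) / 5) + M * (1+t/2) powr (-4) / 4"
  proof (intro add_mono mult_left_mono c2)
    show "(LINT x|lborel. indicator {..<t/2} x * (\<bar>x\<bar>^2 * \<bar>f x\<bar>)) \<le> (LINT x|lborel. \<bar>x\<bar>^2 * \<bar>f x\<bar>)"
      using set_integral_le_integral[OF schwartz_integrable_abs_power_mult[OF f, of 2], of "{..<t/2}"]
      unfolding set_lebesgue_integral_def by simp
    show "(LINT x:{t/2..}|lborel. (1 + \<bar>x\<bar>)^1 * \<bar>f x\<bar>) \<le> M * (1+t/2) powr (-4) / 4"
      using set_integral_tail_le(2)[of 1 "t/2"] t by simp
  qed (rule rl_integral_mult_tail_le(2)[OF t])
  finally show ?thesis unfolding c2_def .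
qed

lemma abs_rl_integral_decay_of_ge_2:
  assumes eh: "e \<le> -1/2" and t: "2 \<le> t"
    and moments: "(LINT x|lborel. f x) = 0" "(LINT x|lborel. x * f x) = 0"
  shows "\<bar>rl_integral e f t\<bar> \<le> (e*(e-1)/2 * (LINT x|lborel. \<bar>x\<bar>^2 * \<bar>f x\<bar>) * 4 powr (5/2)
      + (M/(e+1) + M/5 + M/4) * 2 powr (5/2)) * (1+\<bar>t\<bar>) powr (-5/2)"
proof -
  define w where "w = (1+t) powr (-5/2)"
  have "(t/2) powr (e-2) \<le> (t/2) powr (-5/2)" using t eh by (intro powr_mono) auto
  also have "\<dots> \<le> ((1/4) * (1+t)) powr (-5/2)" using t by (intro powr_mono2') auto
  also have "\<dots> = 4 powr (5/2) * w"
    unfolding w_def using t by (simp add: powr_mult powr_minus_divide powr_divide)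
  finally have near: "(t/2) powr (e-2) \<le> 4 powr (5/2) * w" .
  have far: "(1+t/2) powr (-k) \<le> 2 powr (5/2) * w" if "5/2 \<le> k" for k :: real
  proof -
    have "(1+t/2) powr (-k) \<le> (1+t/2) powr (-5/2)" using t that by (intro powr_mono) auto
    also have "\<dots> \<le> ((1/2) * (1+t)) powr (-5/2)" using t by (intro powr_mono2') auto
    also have "\<dots> = 2 powr (5/2) * w"
      unfolding w_def using t by (simp add: powr_mult powr_minus_divide powr_divide)
    finally show ?thesis .
  qed
  have "0 \<le> e*(e-1)/2" using e by (simp add: mult_nonpos_nonpos)
  moreover have "0 \<le> (LINT x|lborel. \<bar>x\<bar>^2 * \<bar>f x\<bar>)" by simp
  ultimately have "e*(e-1)/2 * (t/2) powr (e-2) * (LINT x|lborel. \<bar>x\<bar>^2 * \<bar>f x\<bar>)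
      + (M * (1+t/2) powr (-6) / (e+1) + M * (1+t/2) powr (-5) / 5) + M * (1+t/2) powr (-4) / 4
    \<le> e*(e-1)/2 * (4 powr (5/2) * w) * (LINT x|lborel. \<bar>x\<bar>^2 * \<bar>f x\<bar>)
      + (M * (2 powr (5/2) * w) / (e+1) + M * (2 powr (5/2) * w) / 5) + M * (2 powr (5/2) * w) / 4"
    using near far[of 6] far[of 5] far[of 4] M e
    by (intro add_mono divide_right_mono mult_left_mono mult_right_mono) auto
  also have "\<dots> = (e*(e-1)/2 * (LINT x|lborel. \<bar>x\<bar>^2 * \<bar>f x\<bar>) * 4 powr (5/2)
      + (M/(e+1) + M/5 + M/4) * 2 powr (5/2)) * w"
    by (simp add: field_simps)
  finally show ?thesis
    using abs_rl_integral_le_of_ge_2[OF t moments] t unfolding w_def by simp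
qed

lemma rl_integral_decay:
  assumes eh: "e \<le> -1/2" and moments: "(LINT x|lborel. f x) = 0" "(LINT x|lborel. x * f x) = 0"
  shows "\<exists>K>0. \<forall>t. \<bar>rl_integral e f t\<bar> \<le> K * (1+\<bar>t\<bar>) powr (-5/2)"
proof -
  define A where "A = M/(e+1) + (LINT x|lborel. \<bar>f x\<bar>)"
  define K1 where "K1 = M/(e+1) + M/5"
  define K2 where "K2 = A * 3 powr (5/2)"
  define K3 where "K3 = e*(e-1)/2 * (LINT x|lborel. \<bar>x\<bar>^2 * \<bar>f x\<bar>) * 4 powr (5/2)
      + (M/(e+1) + M/5 + M/4) * 2 powr (5/2)"
  have "0 < M/(e+1)" using M e by simp
  then have K1: "0 < K1" and A: "0 \<le> A" unfolding K1_def A_def using M by auto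
  have K2: "0 \<le> K2" unfolding K2_def using A by simp
  have K3: "0 \<le> K3"
    unfolding K3_def using M e by (intro add_nonneg_nonneg mult_nonneg_nonneg) (auto simp: mult_nonpos_nonpos)
  have "\<bar>rl_integral e f t\<bar> \<le> (K1 + K2 + K3) * (1+\<bar>t\<bar>) powr (-5/2)" for t
  proof -
    define w where "w = (1+\<bar>t\<bar>) powr (-5/2)"
    have w: "0 < w" unfolding w_def by simp
    consider "t \<le> 0" | "0 \<le> t" "t \<le> 2" | "2 \<le> t" by linarith
    then have "\<bar>rl_integral e f t\<bar> \<le> K1 * w \<or> \<bar>rl_integral e f t\<bar> \<le> K2 * w \<or> \<bar>rl_integral e f t\<bar> \<le> K3 * w"
    proof cases
      case 1
      then show ?thesis using abs_rl_integral_le_of_nonpos unfolding K1_def w_def by blast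
    next
      case 2
      then have "3 powr (-5/2) \<le> w" unfolding w_def by (intro powr_mono2') auto
      then have "1 \<le> 3 powr (5/2) * w"
        using mult_left_mono[of "3 powr (-5/2)" w "3 powr (5/2)"] by (simp add: powr_add[symmetric])
      then have "A * 1 \<le> A * (3 powr (5/2) * w)" using A by (rule mult_left_mono)
      then have "A \<le> K2 * w" unfolding K2_def by (simp add: mult.assoc)
      then show ?thesis using abs_rl_integral_le[of t] unfolding A_def by auto
    next
      case 3
      then show ?thesis using abs_rl_integral_decay_of_ge_2[OF eh _ moments] unfolding K3_def w_def by blast
    qed
    moreover have "K1 * w \<le> (K1+K2+K3) * w" "K2 * w \<le> (K1+K2+K3) * w" "K3 * w \<le> (K1+K2+K3) * w"
      using K1 K2 K3 w by (auto intro!: mult_right_mono)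
    ultimately show ?thesis unfolding w_def by linarith
  qed
  then show ?thesis using K1 K2 K3 by (intro exI[of _ "K1+K2+K3"]) auto
qed

end

lemma meyer_type_wavelet_moments:
  assumes "meyer_type_wavelet \<psi>"
  shows "(LINT x|lborel. \<psi> x) = 0" and "(LINT x|lborel. x * \<psi> x) = 0"
proof -
  obtain a where a: "a > 0" "\<And>\<xi>. \<bar>\<xi>\<bar> < a \<Longrightarrow> fourier \<psi> \<xi> = 0"
    using assms unfolding meyer_type_wavelet_def by auto
  have "schwartz \<psi>" using assms unfolding meyer_type_wavelet_def by simp
  show "(LINT x|lborel. \<psi> x) = 0" using a by (intro integral_eq_0_of_fourier_0) simp
  show "(LINT x|lborel. x * \<psi> x) = 0"
    by (rule first_moment_eq_0_of_fourier_vanishing[OF \<open>schwartz \<psi>\<close> a])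
qed

lemma psiH_borel_measurable:
  assumes [measurable]: "f \<in> borel_measurable borel"
  shows "psiH H f \<in> borel_measurable borel"
proof -
  have "(\<lambda>(t, x). rl_kernel (H - 3/2) t x * f x) \<in> borel_measurable (lborel \<Otimes>\<^sub>M lborel)"
    unfolding rl_kernel_def by measurable
  then have "rl_integral (H - 3/2) f \<in> borel_measurable lborel"
    unfolding rl_integral_def by (rule lborel.borel_measurable_lebesgue_integral)
  then show ?thesis unfolding psiH_eq_rl_integral[abs_def] by simp
qed

text \<open>For \<open>H < 1\<close> the kernel exponent is \<open>H - 3/2 \<le> -1/2\<close>, which yields the decay rate \<open>5/2\<close>.\<close>
lemma psiH_decay:
  assumes mw: "meyer_type_wavelet \<psi>" and H: "1/2 < H" "H < 1"
  shows "\<exists>K>0. \<forall>y. \<bar>psiH H \<psi> y\<bar> \<le> K * (1+\<bar>y\<bar>) powr (-5/2)"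
proof -
  have f: "schwartz \<psi>" using mw unfolding meyer_type_wavelet_def by simp
  obtain M where M: "M > 0" "\<And>x. \<bar>\<psi> x\<bar> \<le> M * (1 + \<bar>x\<bar>) powr (-6)"
    using schwartz_decay[OF f, of 6] by auto
  obtain K where K: "K > 0" "\<And>t. \<bar>rl_integral (H - 3/2) \<psi> t\<bar> \<le> K * (1+\<bar>t\<bar>) powr (-5/2)"
    using rl_integral_decay[OF f M, of "H - 3/2"] meyer_type_wavelet_moments[OF mw] H by auto
  define g where "g = \<bar>1 / Gamma (H - 1/2)\<bar>"
  have "\<bar>psiH H \<psi> y\<bar> \<le> (g * K + 1) * (1+\<bar>y\<bar>) powr (-5/2)" for y
  proof -
    have "\<bar>psiH H \<psi> y\<bar> = g * \<bar>rl_integral (H - 3/2) \<psi> y\<bar>"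
      unfolding psiH_eq_rl_integral g_def by (simp add: abs_mult abs_divide)
    also have "\<dots> \<le> g * (K * (1+\<bar>y\<bar>) powr (-5/2))" unfolding g_def by (intro mult_left_mono K(2)) auto
    also have "\<dots> \<le> (g * K + 1) * (1+\<bar>y\<bar>) powr (-5/2)" by (simp add: algebra_simps)
    finally show ?thesis .
  qed
  moreover have "0 < g * K + 1" unfolding g_def using K by (simp add: add_nonneg_pos)
  ultimately show ?thesis by blast
qed

section \<open>Weighted sums of dilated products\<close>

context
  fixes p1 p2 :: "real \<Rightarrow> real" and K :: real
  assumes p_measurable [measurable]: "p1 \<in> borel_measurable borel" "p2 \<in> borel_measurable borel"
    and K: "0 < K"
    and p1_decay: "\<And>y. \<bar>p1 y\<bar> \<le> K * (1+\<bar>y\<bar>) powr (-5/2)"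
    and p2_decay: "\<And>y. \<bar>p2 y\<bar> \<le> K * (1+\<bar>y\<bar>) powr (-5/2)"
begin

lemma set_integrable_dilated_product:
  fixes a b k1 k2 :: real
  assumes b: "b \<noteq> 0" and S: "S \<in> sets borel"
  shows "set_integrable lborel S (\<lambda>x. p1 (a*x - k1) * p2 (b*x - k2))"
proof -
  have p1_bound: "\<bar>p1 y\<bar> \<le> K" for y
  proof -
    have "(1+\<bar>y\<bar>) powr (-5/2) \<le> (1+\<bar>y\<bar>) powr 0" by (rule powr_mono) auto
    then have "(1+\<bar>y\<bar>) powr (-5/2) \<le> 1" by (simp add: add_nonneg_eq_0_iff)
    then have "K * (1+\<bar>y\<bar>) powr (-5/2) \<le> K" using K by (simp add: mult_left_le)
    then show ?thesis using p1_decay[of y] by simp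
  qed
  have "integrable lborel (\<lambda>x. p1 (a*x - k1) * p2 (b*x - k2))"
  proof (rule Bochner_Integration.integrable_bound)
    show "integrable lborel (\<lambda>x. K * (K * (1 + \<bar>b*x - k2\<bar>) powr (-5/2)))"
      using integrable_one_plus_abs_affine_powr[of "5/2" b k2] b by simp
    show "AE x in lborel. norm (p1 (a*x - k1) * p2 (b*x - k2)) \<le> norm (K * (K * (1 + \<bar>b*x - k2\<bar>) powr (-5/2)))"
      using p1_bound p2_decay K by (intro AE_I2) (simp add: abs_mult mult_mono')
  qed measurable
  then show ?thesis
    unfolding set_integrable_def using S by (intro integrable_mult_indicator) auto
qed

lemma sum_weighted_first_factor_le:
  fixes F :: "int set"
  assumes F: "finite F" and a: "0 < a" "a \<le> b" and b: "1 \<le> b" and J: "0 \<le> J"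
  shows "(\<Sum>k\<in>F. sqrt (ln (3 + J + \<bar>real_of_int k\<bar>)) * \<bar>p1 (a*x - real_of_int k)\<bar>)
     \<le> 36/5 * K * sqrt (ln (3 + J + b)) * (1+\<bar>x\<bar>) powr (1/4)"
proof -
  define L where "L = sqrt (ln (3 + J + b))"
  have L: "0 \<le> L" unfolding L_def using b J by simp
  have "(\<Sum>k\<in>F. sqrt (ln (3 + J + \<bar>real_of_int k\<bar>)) * \<bar>p1 (a*x - real_of_int k)\<bar>)
      \<le> (\<Sum>k\<in>F. (2 * L * (1+\<bar>x\<bar>) powr (1/4) * (1 + \<bar>a*x - real_of_int k\<bar>) powr (1/4))
                 * (K * (1+\<bar>a*x - real_of_int k\<bar>) powr (-5/2)))"
    unfolding L_def using sqrt_ln_le_weight_product[OF a b J] p1_decay L[unfolded L_def]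
    by (intro sum_mono mult_mono) auto
  also have "\<dots> = 2 * L * (1+\<bar>x\<bar>) powr (1/4) * K * (\<Sum>k\<in>F. (1 + \<bar>a*x - real_of_int k\<bar>) powr (-(9/4)))"
    by (simp add: sum_distrib_left powr_add[symmetric] algebra_simps)
  also have "\<dots> \<le> 2 * L * (1+\<bar>x\<bar>) powr (1/4) * K * (2 * ((9/4)/(9/4-1)))"
    using sum_powr_dist_int_le[OF F, of "9/4" "a*x"] L K by (intro mult_left_mono) auto
  finally show ?thesis unfolding L_def by (simp add: algebra_simps)
qed

lemma sum_weighted_second_factor_le:
  fixes Z :: "int set" and \<phi> :: "int \<Rightarrow> nat"
  assumes Z: "finite Z" and inj: "inj_on \<phi> Z" and Z_bound: "\<And>k. k \<in> Z \<Longrightarrow> \<bar>real_of_int k\<bar> \<le> b"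
    and b: "0 \<le> b" and J: "0 \<le> J" and v: "0 \<le> v" and dist: "\<And>k. k \<in> Z \<Longrightarrow> v + real (\<phi> k) \<le> \<bar>b*x - real_of_int k\<bar>"
  shows "(\<Sum>k\<in>Z. sqrt (ln (3 + J + \<bar>real_of_int k\<bar>)) * \<bar>p2 (b*x - real_of_int k)\<bar>)
     \<le> 5/3 * K * sqrt (ln (3 + J + b)) * (1 + v) powr (-(3/2))"
proof -
  define L where "L = sqrt (ln (3 + J + b))"
  have "(\<Sum>k\<in>Z. sqrt (ln (3 + J + \<bar>real_of_int k\<bar>)) * \<bar>p2 (b*x - real_of_int k)\<bar>)
      \<le> (\<Sum>k\<in>Z. L * (K * (1 + \<bar>b*x - real_of_int k\<bar>) powr (-(5/2))))"
  proof (intro sum_mono mult_mono)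
    fix k assume "k \<in> Z"
    then have "3 + J + \<bar>real_of_int k\<bar> \<le> 3 + J + b" using Z_bound by simp
    then show "sqrt (ln (3 + J + \<bar>real_of_int k\<bar>)) \<le> L" unfolding L_def using J by simp
    show "\<bar>p2 (b*x - real_of_int k)\<bar> \<le> K * (1 + \<bar>b*x - real_of_int k\<bar>) powr (-(5/2))"
      using p2_decay by simp
  qed (use b J in \<open>simp_all add: L_def\<close>)
  also have "\<dots> = L * K * (\<Sum>k\<in>Z. (1 + \<bar>b*x - real_of_int k\<bar>) powr (-(5/2)))"
    by (simp add: sum_distrib_left algebra_simps)
  also have "\<dots> \<le> L * K * ((5/2)/(5/2-1) * (1 + v) powr (1-5/2))"
    using sum_powr_inj_le[OF Z inj, of "5/2" v "\<lambda>k. \<bar>b*x - real_of_int k\<bar>"] v dist K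
    using b J by (intro mult_left_mono) (auto simp: L_def)
  finally show ?thesis unfolding L_def by (simp add: algebra_simps)
qed

lemma weighted_product_sum_le:
  fixes F Z :: "int set" and \<phi> :: "int \<Rightarrow> nat"
  assumes a: "0 < a" "a \<le> b" and b: "1 \<le> b" and J: "0 \<le> J1" "0 \<le> J2"
    and F: "finite F" and Z: "finite Z" and Z_bound: "\<And>k. k \<in> Z \<Longrightarrow> \<bar>real_of_int k\<bar> \<le> b"
    and inj: "inj_on \<phi> Z" and v: "0 \<le> v"
    and dist: "\<And>k. k \<in> Z \<Longrightarrow> v + real (\<phi> k) \<le> \<bar>b*x - real_of_int k\<bar>"
    and x_le: "1 + \<bar>x\<bar> \<le> 2 * (1 + v)"
  shows "(\<Sum>k1\<in>F. \<Sum>k2\<in>Z. sqrt (ln (3 + J1 + \<bar>real_of_int k1\<bar>)) * sqrt (ln (3 + J2 + \<bar>real_of_int k2\<bar>)) *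
            \<bar>p1 (a*x - real_of_int k1) * p2 (b*x - real_of_int k2)\<bar>)
       \<le> 12 * 2 powr (1/4) * K^2 * sqrt (ln (3 + J1 + b)) * sqrt (ln (3 + J2 + b)) * (1 + v) powr (-5/4)"
    (is "_ \<le> ?C * _")
proof -
  define W1 where "W1 = (\<lambda>k::int. sqrt (ln (3 + J1 + \<bar>real_of_int k\<bar>)))"
  define W2 where "W2 = (\<lambda>k::int. sqrt (ln (3 + J2 + \<bar>real_of_int k\<bar>)))"
  have W_nonneg: "0 \<le> W1 k" "0 \<le> W2 k" for k
    unfolding W1_def W2_def using J by auto
  have "(1+\<bar>x\<bar>) powr (1/4) \<le> (2 * (1 + v)) powr (1/4)" using x_le by (intro powr_mono2) auto
  also have "\<dots> = 2 powr (1/4) * (1 + v) powr (1/4)"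
    using v powr_mult[of 2 "1 + v" "1/4"] by simp
  finally have x_pow: "(1+\<bar>x\<bar>) powr (1/4) \<le> 2 powr (1/4) * (1 + v) powr (1/4)" .
  have "(\<Sum>k1\<in>F. \<Sum>k2\<in>Z. W1 k1 * W2 k2 * \<bar>p1 (a*x - real_of_int k1) * p2 (b*x - real_of_int k2)\<bar>)
      = (\<Sum>k1\<in>F. W1 k1 * \<bar>p1 (a*x - real_of_int k1)\<bar>) * (\<Sum>k2\<in>Z. W2 k2 * \<bar>p2 (b*x - real_of_int k2)\<bar>)"
    by (simp add: sum_product abs_mult algebra_simps)
  also have "\<dots> \<le> (36/5 * K * sqrt (ln (3 + J1 + b)) * (1+\<bar>x\<bar>) powr (1/4))
                 * (5/3 * K * sqrt (ln (3 + J2 + b)) * (1 + v) powr (-(3/2)))"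
    unfolding W1_def W2_def
    using sum_weighted_first_factor_le[OF F a b J(1), of x]
      sum_weighted_second_factor_le[OF Z inj Z_bound _ J(2) v dist]
      W_nonneg K J b
    by (intro mult_mono) (auto intro!: sum_nonneg mult_nonneg_nonneg)
  also have "\<dots> \<le> (36/5 * K * sqrt (ln (3 + J1 + b)) * (2 powr (1/4) * (1 + v) powr (1/4)))
                 * (5/3 * K * sqrt (ln (3 + J2 + b)) * (1 + v) powr (-(3/2)))"
    using x_pow K b J by (intro mult_right_mono mult_left_mono) auto
  also have "\<dots> = ?C * ((1 + v) powr (1/4) * (1 + v) powr (-(3/2)))"
    by (simp add: power2_eq_square algebra_simps)
  also have "(1 + v) powr (1/4) * (1 + v) powr (-(3/2)) = (1 + v) powr (-5/4)"
    using v by (simp add: powr_add[symmetric])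
  finally show ?thesis unfolding W1_def W2_def .
qed

lemma weighted_double_sum_le:
  fixes F Z :: "int set" and \<phi> :: "int \<Rightarrow> nat" and S :: "real set" and v :: "real \<Rightarrow> real"
  assumes a: "0 < a" "a \<le> b" and b: "1 \<le> b" and J: "0 \<le> J1" "0 \<le> J2"
    and F: "finite F" and Z: "finite Z" and Z_bound: "\<And>k. k \<in> Z \<Longrightarrow> \<bar>real_of_int k\<bar> \<le> b"
    and inj: "inj_on \<phi> Z" and S: "S \<in> sets borel" and v: "\<And>x. x \<in> S \<Longrightarrow> 0 \<le> v x"
    and dist: "\<And>x k. x \<in> S \<Longrightarrow> k \<in> Z \<Longrightarrow> v x + real (\<phi> k) \<le> \<bar>b*x - real_of_int k\<bar>"
    and x_le: "\<And>x. x \<in> S \<Longrightarrow> 1 + \<bar>x\<bar> \<le> 2 * (1 + v x)"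
    and v_int: "set_integrable lborel S (\<lambda>x. (1 + v x) powr (-5/4))"
  shows "(\<Sum>k1\<in>F. \<Sum>k2\<in>Z. sqrt (ln (3 + J1 + \<bar>real_of_int k1\<bar>)) * sqrt (ln (3 + J2 + \<bar>real_of_int k2\<bar>)) *
            \<bar>LINT x:S|lborel. p1 (a*x - real_of_int k1) * p2 (b*x - real_of_int k2)\<bar>)
       \<le> 12 * 2 powr (1/4) * K^2 * sqrt (ln (3 + J1 + b)) * sqrt (ln (3 + J2 + b))
           * (LINT x:S|lborel. (1 + v x) powr (-5/4))"
    (is "_ \<le> ?C * _")
proof -
  define W where "W = (\<lambda>k1 k2::int. sqrt (ln (3 + J1 + \<bar>real_of_int k1\<bar>)) * sqrt (ln (3 + J2 + \<bar>real_of_int k2\<bar>)))"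
  define g where "g = (\<lambda>k1 k2 x. W k1 k2 * \<bar>p1 (a*x - real_of_int k1) * p2 (b*x - real_of_int k2)\<bar>)"
  have W_nonneg: "0 \<le> W k1 k2" for k1 k2
    unfolding W_def using J by auto
  have f_int: "set_integrable lborel S (\<lambda>x. p1 (a*x - real_of_int k1) * p2 (b*x - real_of_int k2))" for k1 k2
    using set_integrable_dilated_product[of b S] b S by simp
  have g_int: "set_integrable lborel S (g k1 k2)" for k1 k2
    unfolding g_def using set_integrable_abs[OF f_int] by (intro set_integrable_mult_right)
  have inner: "set_integrable lborel S (\<lambda>x. \<Sum>k2\<in>Z. g k1 k2 x) \<and>
      (LINT x:S|lborel. \<Sum>k2\<in>Z. g k1 k2 x) = (\<Sum>k2\<in>Z. LINT x:S|lborel. g k1 k2 x)" for k1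
    by (rule set_integral_sum[OF g_int])
  have outer: "set_integrable lborel S (\<lambda>x. \<Sum>k1\<in>F. \<Sum>k2\<in>Z. g k1 k2 x) \<and>
      (LINT x:S|lborel. \<Sum>k1\<in>F. \<Sum>k2\<in>Z. g k1 k2 x) = (\<Sum>k1\<in>F. LINT x:S|lborel. \<Sum>k2\<in>Z. g k1 k2 x)"
    using inner by (intro set_integral_sum) blast
  have "(\<Sum>k1\<in>F. \<Sum>k2\<in>Z. W k1 k2 *
      \<bar>LINT x:S|lborel. p1 (a*x - real_of_int k1) * p2 (b*x - real_of_int k2)\<bar>)
      \<le> (\<Sum>k1\<in>F. \<Sum>k2\<in>Z. LINT x:S|lborel. g k1 k2 x)"
    using set_integral_norm_bound[OF f_int] W_nonneg unfolding g_def
    by (intro sum_mono) (simp add: mult_left_mono)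
  also have "\<dots> = (LINT x:S|lborel. \<Sum>k1\<in>F. \<Sum>k2\<in>Z. g k1 k2 x)"
    using inner outer by simp
  also have "\<dots> \<le> (LINT x:S|lborel. ?C * (1 + v x) powr (-5/4))"
    using outer v_int weighted_product_sum_le[OF a b J F Z Z_bound inj v dist x_le]
    unfolding g_def W_def by (intro set_integral_mono set_integrable_mult_right) (auto simp: mult.assoc)
  finally show ?thesis unfolding W_def by (simp add: mult.assoc)
qed

lemma abs_int_le_of_mem_window:
  assumes "0 \<le> m" "M \<le> 1" "0 \<le> b" "k \<in> {\<lceil>b*m\<rceil>..\<lfloor>b*M\<rfloor>}"
  shows "\<bar>real_of_int k\<bar> \<le> b"
proof -
  have "b*m \<le> real_of_int k" "real_of_int k \<le> b*M"
    using assms(4) by (auto simp: ceiling_le_iff le_floor_iff)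
  moreover have "0 \<le> b*m" "b*M \<le> b" using assms(1-3) by (auto simp: mult_left_le)
  ultimately show ?thesis by linarith
qed

lemma weighted_double_sum_atMost_le:
  fixes F :: "int set"
  assumes a: "0 < a" "a \<le> b" and b: "1 \<le> b" and J: "0 \<le> J1" "0 \<le> J2" and F: "finite F"
    and m: "0 \<le> m" "m \<le> M" "M \<le> 1"
  shows "(\<Sum>k1\<in>F. \<Sum>k2\<in>{\<lceil>b*m\<rceil>..\<lfloor>b*M\<rfloor>}. sqrt (ln (3 + J1 + \<bar>real_of_int k1\<bar>)) * sqrt (ln (3 + J2 + \<bar>real_of_int k2\<bar>)) *
            \<bar>LINT x:{..m}|lborel. p1 (a*x - real_of_int k1) * p2 (b*x - real_of_int k2)\<bar>)
       \<le> 12 * 2 powr (1/4) * K^2 * sqrt (ln (3 + J1 + b)) * sqrt (ln (3 + J2 + b)) * (4 / b)"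
proof -
  have "(LINT x:{..m}|lborel. (1 + b*(m-x)) powr (-5/4)) = 4/b"
    and v_int: "set_integrable lborel {..m} (\<lambda>x. (1 + b*(m-x)) powr (-5/4))"
    using set_integral_powr_affine_atMost[of b 1 "5/4" m] b by auto
  moreover have "(\<Sum>k1\<in>F. \<Sum>k2\<in>{\<lceil>b*m\<rceil>..\<lfloor>b*M\<rfloor>}. sqrt (ln (3 + J1 + \<bar>real_of_int k1\<bar>)) * sqrt (ln (3 + J2 + \<bar>real_of_int k2\<bar>)) *
            \<bar>LINT x:{..m}|lborel. p1 (a*x - real_of_int k1) * p2 (b*x - real_of_int k2)\<bar>)
       \<le> 12 * 2 powr (1/4) * K^2 * sqrt (ln (3 + J1 + b)) * sqrt (ln (3 + J2 + b))
           * (LINT x:{..m}|lborel. (1 + b*(m-x)) powr (-5/4))"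
  proof (rule weighted_double_sum_le[OF a b J F _ abs_int_le_of_mem_window[OF m(1,3)] _ _ _ _ _ v_int,
        where \<phi> = "\<lambda>k. nat (k - \<lceil>b*m\<rceil>)"])
    show "inj_on (\<lambda>k. nat (k - \<lceil>b*m\<rceil>)) {\<lceil>b*m\<rceil>..\<lfloor>b*M\<rfloor>}" by (auto simp: inj_on_def)
    show "b*(m-x) + real (nat (k - \<lceil>b*m\<rceil>)) \<le> \<bar>b*x - real_of_int k\<bar>"
      if "x \<in> {..m}" "k \<in> {\<lceil>b*m\<rceil>..\<lfloor>b*M\<rfloor>}" for x k
    proof -
      have "\<lceil>b*m\<rceil> \<le> k" using that(2) by simp
      then have "real (nat (k - \<lceil>b*m\<rceil>)) = real_of_int k - real_of_int \<lceil>b*m\<rceil>" by simp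
      moreover have "b*m \<le> real_of_int \<lceil>b*m\<rceil>" by (rule le_of_int_ceiling)
      moreover have "b*x \<le> b*m" using that(1) b by simp
      moreover have "real_of_int \<lceil>b*m\<rceil> \<le> real_of_int k" using \<open>\<lceil>b*m\<rceil> \<le> k\<close> by simp
      moreover have "b*(m-x) = b*m - b*x" by (simp add: algebra_simps)
      ultimately show ?thesis by linarith
    qed
    show "1 + \<bar>x\<bar> \<le> 2 * (1 + b*(m-x))" if "x \<in> {..m}" for x
    proof -
      have "m - x \<le> b*(m-x)" using b that by (simp add: mult_le_cancel_right1)
      moreover have "\<bar>x\<bar> \<le> 1 + (m - x)" using that m by (cases "0 \<le> x") auto
      ultimately show ?thesis using that by simp
    qed
  qed (use b m in auto)
  ultimately show ?thesis by simp
qed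

lemma weighted_double_sum_atLeast_le:
  fixes F :: "int set"
  assumes a: "0 < a" "a \<le> b" and b: "1 \<le> b" and J: "0 \<le> J1" "0 \<le> J2" and F: "finite F"
    and m: "0 \<le> m" "m \<le> M" "M \<le> 1"
  shows "(\<Sum>k1\<in>F. \<Sum>k2\<in>{\<lceil>b*m\<rceil>..\<lfloor>b*M\<rfloor>}. sqrt (ln (3 + J1 + \<bar>real_of_int k1\<bar>)) * sqrt (ln (3 + J2 + \<bar>real_of_int k2\<bar>)) *
            \<bar>LINT x:{M..}|lborel. p1 (a*x - real_of_int k1) * p2 (b*x - real_of_int k2)\<bar>)
       \<le> 12 * 2 powr (1/4) * K^2 * sqrt (ln (3 + J1 + b)) * sqrt (ln (3 + J2 + b)) * (4 / b)"
proof -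
  have "(LINT x:{M..}|lborel. (1 + b*(x-M)) powr (-5/4)) = 4/b"
    and v_int: "set_integrable lborel {M..} (\<lambda>x. (1 + b*(x-M)) powr (-5/4))"
    using set_integral_powr_affine_atLeast[of b 1 "5/4" M] b by auto
  moreover have "(\<Sum>k1\<in>F. \<Sum>k2\<in>{\<lceil>b*m\<rceil>..\<lfloor>b*M\<rfloor>}. sqrt (ln (3 + J1 + \<bar>real_of_int k1\<bar>)) * sqrt (ln (3 + J2 + \<bar>real_of_int k2\<bar>)) *
            \<bar>LINT x:{M..}|lborel. p1 (a*x - real_of_int k1) * p2 (b*x - real_of_int k2)\<bar>)
       \<le> 12 * 2 powr (1/4) * K^2 * sqrt (ln (3 + J1 + b)) * sqrt (ln (3 + J2 + b))
           * (LINT x:{M..}|lborel. (1 + b*(x-M)) powr (-5/4))"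
  proof (rule weighted_double_sum_le[OF a b J F _ abs_int_le_of_mem_window[OF m(1,3)] _ _ _ _ _ v_int,
        where \<phi> = "\<lambda>k. nat (\<lfloor>b*M\<rfloor> - k)"])
    show "inj_on (\<lambda>k. nat (\<lfloor>b*M\<rfloor> - k)) {\<lceil>b*m\<rceil>..\<lfloor>b*M\<rfloor>}" by (auto simp: inj_on_def)
    show "b*(x-M) + real (nat (\<lfloor>b*M\<rfloor> - k)) \<le> \<bar>b*x - real_of_int k\<bar>"
      if "x \<in> {M..}" "k \<in> {\<lceil>b*m\<rceil>..\<lfloor>b*M\<rfloor>}" for x k
    proof -
      have "k \<le> \<lfloor>b*M\<rfloor>" using that(2) by simp
      then have "real (nat (\<lfloor>b*M\<rfloor> - k)) = real_of_int \<lfloor>b*M\<rfloor> - real_of_int k" by simp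
      moreover have "real_of_int \<lfloor>b*M\<rfloor> \<le> b*M" by (rule of_int_floor_le)
      moreover have "b*M \<le> b*x" using that(1) b by simp
      moreover have "real_of_int k \<le> real_of_int \<lfloor>b*M\<rfloor>" using \<open>k \<le> \<lfloor>b*M\<rfloor>\<close> by simp
      moreover have "b*(x-M) = b*x - b*M" by (simp add: algebra_simps)
      ultimately show ?thesis by linarith
    qed
    show "1 + \<bar>x\<bar> \<le> 2 * (1 + b*(x-M))" if "x \<in> {M..}" for x
    proof -
      have "x - M \<le> b*(x-M)" using b that by (simp add: mult_le_cancel_right1)
      moreover have "\<bar>x\<bar> \<le> 1 + (x - M)" using that m by auto
      ultimately show ?thesis using that by simp
    qed
  qed (use b m in auto)
  ultimately show ?thesis by simp
qed

lemma dyadic_weighted_sums_le: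
  fixes j1 j2 :: int
  assumes j: "j1 \<le> j2" "0 \<le> j2" and m: "0 \<le> m" "m \<le> M" "M \<le> 1"
  defines "Z \<equiv> {\<lceil>2 powr real_of_int j2 * m\<rceil>..\<lfloor>2 powr real_of_int j2 * M\<rfloor>}"
    and "B \<equiv> 48 * 2 powr (1/4) * K^2 * sqrt (ln (3 + \<bar>real_of_int j1\<bar> + 2 powr real_of_int j2))
               * sqrt (ln (3 + \<bar>real_of_int j2\<bar> + 2 powr real_of_int j2)) * 2 powr (- real_of_int j2)"
  shows "(\<lambda>k1. \<Sum>k2\<in>Z. Lweight j1 j2 k1 k2 * \<bar>LINT x:{..m}|lborel.
            p1 (2 powr real_of_int j1 * x - real_of_int k1) * p2 (2 powr real_of_int j2 * x - real_of_int k2)\<bar>)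
          summable_on UNIV \<and>
         (\<Sum>\<^sub>\<infinity>k1. \<Sum>k2\<in>Z. Lweight j1 j2 k1 k2 * \<bar>LINT x:{..m}|lborel.
            p1 (2 powr real_of_int j1 * x - real_of_int k1) * p2 (2 powr real_of_int j2 * x - real_of_int k2)\<bar>) \<le> B"
    and "(\<lambda>k1. \<Sum>k2\<in>Z. Lweight j1 j2 k1 k2 * \<bar>LINT x:{M..}|lborel.
            p1 (2 powr real_of_int j1 * x - real_of_int k1) * p2 (2 powr real_of_int j2 * x - real_of_int k2)\<bar>)
          summable_on UNIV \<and>
         (\<Sum>\<^sub>\<infinity>k1. \<Sum>k2\<in>Z. Lweight j1 j2 k1 k2 * \<bar>LINT x:{M..}|lborel.
            p1 (2 powr real_of_int j1 * x - real_of_int k1) * p2 (2 powr real_of_int j2 * x - real_of_int k2)\<bar>) \<le> B"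
proof -
  have a: "0 < 2 powr real_of_int j1" "2 powr real_of_int j1 \<le> 2 powr real_of_int j2"
    using j by simp_all
  have b: "1 \<le> 2 powr real_of_int j2"
    using j by (intro ge_one_powr_ge_zero) auto
  have B_eq: "12 * 2 powr (1/4) * K^2 * sqrt (ln (3 + \<bar>real_of_int j1\<bar> + 2 powr real_of_int j2))
      * sqrt (ln (3 + \<bar>real_of_int j2\<bar> + 2 powr real_of_int j2)) * (4 / 2 powr real_of_int j2) = B"
  proof -
    have "4 / 2 powr real_of_int j2 = 4 * 2 powr (- real_of_int j2)" by (simp add: powr_minus divide_inverse)
    then show ?thesis unfolding B_def by (simp only: mult_ac)
  qed
  have below: "(\<Sum>k1\<in>F. \<Sum>k2\<in>Z. Lweight j1 j2 k1 k2 * \<bar>LINT x:{..m}|lborel.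
            p1 (2 powr real_of_int j1 * x - real_of_int k1) * p2 (2 powr real_of_int j2 * x - real_of_int k2)\<bar>) \<le> B"
    if "finite F" for F
    using weighted_double_sum_atMost_le[where ?J1.0 = "\<bar>real_of_int j1\<bar>" and ?J2.0 = "\<bar>real_of_int j2\<bar>", OF a b _ _ that m]
    unfolding Lweight_def Z_def B_eq by (simp add: mult.assoc)
  have above: "(\<Sum>k1\<in>F. \<Sum>k2\<in>Z. Lweight j1 j2 k1 k2 * \<bar>LINT x:{M..}|lborel.
            p1 (2 powr real_of_int j1 * x - real_of_int k1) * p2 (2 powr real_of_int j2 * x - real_of_int k2)\<bar>) \<le> B"
    if "finite F" for F
    using weighted_double_sum_atLeast_le[where ?J1.0 = "\<bar>real_of_int j1\<bar>" and ?J2.0 = "\<bar>real_of_int j2\<bar>", OF a b _ _ that m]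
    unfolding Lweight_def Z_def B_eq by (simp add: mult.assoc)
  show "(\<lambda>k1. \<Sum>k2\<in>Z. Lweight j1 j2 k1 k2 * \<bar>LINT x:{..m}|lborel.
            p1 (2 powr real_of_int j1 * x - real_of_int k1) * p2 (2 powr real_of_int j2 * x - real_of_int k2)\<bar>)
          summable_on UNIV \<and>
         (\<Sum>\<^sub>\<infinity>k1. \<Sum>k2\<in>Z. Lweight j1 j2 k1 k2 * \<bar>LINT x:{..m}|lborel.
            p1 (2 powr real_of_int j1 * x - real_of_int k1) * p2 (2 powr real_of_int j2 * x - real_of_int k2)\<bar>) \<le> B"
    by (intro summable_on_infsum_le_of_finite_sums_le below) (auto intro!: sum_nonneg simp: Lweight_def)
  show "(\<lambda>k1. \<Sum>k2\<in>Z. Lweight j1 j2 k1 k2 * \<bar>LINT x:{M..}|lborel.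
            p1 (2 powr real_of_int j1 * x - real_of_int k1) * p2 (2 powr real_of_int j2 * x - real_of_int k2)\<bar>)
          summable_on UNIV \<and>
         (\<Sum>\<^sub>\<infinity>k1. \<Sum>k2\<in>Z. Lweight j1 j2 k1 k2 * \<bar>LINT x:{M..}|lborel.
            p1 (2 powr real_of_int j1 * x - real_of_int k1) * p2 (2 powr real_of_int j2 * x - real_of_int k2)\<bar>) \<le> B"
    by (intro summable_on_infsum_le_of_finite_sums_le above) (auto intro!: sum_nonneg simp: Lweight_def)
qed

end

lemma Zset_eq_Icc:
  "Zset j t s = {\<lceil>2 powr real_of_int j * min s t\<rceil>..\<lfloor>2 powr real_of_int j * max s t\<rfloor>}"
proof -
  have "c \<le> real_of_int k * 2 powr (- real_of_int j) \<longleftrightarrow> 2 powr real_of_int j * c \<le> real_of_int k"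
    and "real_of_int k * 2 powr (- real_of_int j) \<le> c \<longleftrightarrow> real_of_int k \<le> 2 powr real_of_int j * c"
    for k c
    by (simp_all add: powr_minus divide_simps mult.commute)
  then show ?thesis
    unfolding Zset_def by (auto simp: ceiling_le_iff le_floor_iff min.commute max.commute)
qed

theorem mainTheorem15:
  fixes H1 H2 :: real and \<psi> :: "real \<Rightarrow> real"
  assumes "1/2 < H1" "H1 < 1" "1/2 < H2" "H2 < 1" "H1 + H2 > 3/2"
    and "meyer_type_wavelet \<psi>"
  shows "\<exists>C>0. \<forall>t s :: real. \<forall>j1 j2 :: int.
     t \<in> {0<..<1} \<and> s \<in> {0<..<1} \<and> j1 \<le> j2 \<and> 0 \<le> j2 \<longrightarrow>
     (let B = C * sqrt (ln (3 + \<bar>real_of_int j1\<bar> + 2 powr real_of_int j2))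
                * sqrt (ln (3 + \<bar>real_of_int j2\<bar> + 2 powr real_of_int j2))
                * 2 powr (- real_of_int j2)
      in (\<forall>k1 k2. set_integrable lborel {..min s t} (prodH H1 H2 \<psi> j1 j2 k1 k2)
                 \<and> set_integrable lborel {max s t..} (prodH H1 H2 \<psi> j1 j2 k1 k2)) \<and>
         (\<lambda>k1. \<Sum>k2\<in>Zset j2 t s. Lweight j1 j2 k1 k2 *
              \<bar>LINT x:{..min s t}|lborel. prodH H1 H2 \<psi> j1 j2 k1 k2 x\<bar>) summable_on UNIV \<and>
         (\<Sum>\<^sub>\<infinity>k1. \<Sum>k2\<in>Zset j2 t s. Lweight j1 j2 k1 k2 *
              \<bar>LINT x:{..min s t}|lborel. prodH H1 H2 \<psi> j1 j2 k1 k2 x\<bar>) \<le> B \<and>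
         (\<lambda>k1. \<Sum>k2\<in>Zset j2 t s. Lweight j1 j2 k1 k2 *
              \<bar>LINT x:{max s t..}|lborel. prodH H1 H2 \<psi> j1 j2 k1 k2 x\<bar>) summable_on UNIV \<and>
         (\<Sum>\<^sub>\<infinity>k1. \<Sum>k2\<in>Zset j2 t s. Lweight j1 j2 k1 k2 *
              \<bar>LINT x:{max s t..}|lborel. prodH H1 H2 \<psi> j1 j2 k1 k2 x\<bar>) \<le> B)"
proof -
  obtain K1 K2 where K1: "K1 > 0" "\<And>y. \<bar>psiH H1 \<psi> y\<bar> \<le> K1 * (1+\<bar>y\<bar>) powr (-5/2)"
    and K2: "K2 > 0" "\<And>y. \<bar>psiH H2 \<psi> y\<bar> \<le> K2 * (1+\<bar>y\<bar>) powr (-5/2)"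
    using psiH_decay[OF assms(6) assms(1,2)] psiH_decay[OF assms(6) assms(3,4)] by blast
  define K where "K = max K1 K2"
  have K: "0 < K" unfolding K_def using K1 by simp
  have decay: "\<bar>psiH H1 \<psi> y\<bar> \<le> K * (1+\<bar>y\<bar>) powr (-5/2)" "\<bar>psiH H2 \<psi> y\<bar> \<le> K * (1+\<bar>y\<bar>) powr (-5/2)" for y
    using K1(2)[of y] K2(2)[of y] mult_right_mono[of K1 K "(1+\<bar>y\<bar>) powr (-5/2)"]
      mult_right_mono[of K2 K "(1+\<bar>y\<bar>) powr (-5/2)"]
    unfolding K_def by auto
  have measurable: "psiH H \<psi> \<in> borel_measurable borel" for H
    using assms(6) by (intro psiH_borel_measurable schwartz_borel_measurable) (simp add: meyer_type_wavelet_def)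
  note psiH_products = set_integrable_dilated_product[OF measurable measurable K decay]
    dyadic_weighted_sums_le[OF measurable measurable K decay]
  show ?thesis
    unfolding Let_def Zset_eq_Icc prodH_def
    \<comment> \<open>\<open>abs_of_nonneg\<close> would rewrite \<open>\<bar>j\<^sub>2\<bar>\<close> in the goal but not in the bounds being applied\<close>
    by (intro exI[of _ "48 * 2 powr (1/4) * K^2"] conjI allI impI)
      (use K in \<open>auto simp: psiH_products simp del: abs_of_nonneg\<close>)
qed

end
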